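(* Let $H$ be a separable complex Hilbert space, $\{v_j\}_{j\in\mathbb N}$ an orthonormal basis of $H$, $\{w_j\}_{j\in\mathbb N}$ a set of unit vectors in $H$, and $N\ge1$. Let $\mathcal B_N=\{w_j\}_{1\le j\le N}\cup\{v_j\}_{j\ge N+1}$ and $\tilde{\mathcal B}_N=\{p_N'(w_1),\dots,p_N'(w_N)\}\cup\{v_j\}_{j\ge N+1}$, where $H_N'=\operatorname{span}\{v_1,\dots,v_N\}$, $H_N''$ is its orthogonal complement, and $p_N',p_N''$ are the orthogonal projections onto $H_N',H_N''$. Let $U_N'$ and $U_N''$ be the $N\times N$ matrices with entries $\langle p_N'(w_i),p_N'(w_j)\rangle$ and $\langle p_N''(w_i),p_N''(w_j)\rangle$ respectively, $1\le i,j\le N$. Assume that $\{p_N'(w_1),\dots,p_N'(w_N)\}$ is a basis of $H_N'$. Then $\mathcal B_N$ is a Riesz basis of $H$ with optimal frame constants $$B_N=\max_{\vec c\in\mathbb C^N,\ |\vec c|\le1}\Big\{\langle U_N'\vec c,\vec c\rangle+\Big(\sqrt{1-|\vec c|^2}+\sqrt{\langle U_N''\vec c,\vec c\rangle}\Big)^2\Big\},$$ $$A_N=\min_{\vec c\in\mathbb C^N,\ |\vec c|\le1}\Big\{\langle U_N'\vec c,\vec c\rangle+\Big(\sqrt{1-|\vec c|^2}-\sqrt{\langle U_N''\vec c,\vec c\rangle}\Big)^2\Big\}.$$ Furthermore, $\tilde{\mathcal B}_N$ is a Riesz basis of $H$, and letting $\Lambda_N$ and $\lambda_N$ be the maximum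 and minimum eigenvalue of $U_N'$ and $\tilde A_N\le\tilde B_N$ the optimal frame constants of $\tilde{\mathcal B}_N$, we have $$B_N\ge\tilde B_N=\max\{\Lambda_N,1\},\qquad \lambda_N=\tilde A_N\le\max\{A_N,\tilde A_N\}\le\min_{1\le j\le N}\|p_N'(w_j)\|^2.$$
   Context: Here $|\vec c|=\sqrt{|c_1|^2+\dots+|c_N|^2}$ and $\langle\cdot,\cdot\rangle$ on $\mathbb C^N$ is the standard Hermitian inner product. A Riesz basis is a sequence $\{u_j\}$ such that there are $0<A\le B<\infty$ with $A\|f\|^2\le\sum_j|\langle f,u_j\rangle|^2\le B\|f\|^2$ for all $f\in H$ and $A\sum|a_j|^2\le\|\sum a_ju_j\|^2\le B\sum|a_j|^2$ for all finite coefficient sequences; its optimal frame constants are the largest such $A$ and smallest such $B$ (equivalently, the infimum and supremum of $\|\sum a_ju_j\|^2$ over finitely supported coefficient sequences with $\sum|a_j|^2=1$). *)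

theory Defs
  imports Complex_Main "HOL-Library.Countable_Set"
begin

text \<open>An abstract complex Hilbert space: the carrier is a type 'a with its additive group
structure, a scalar multiplication sc by complex numbers and an inner product ip
(linear in the first argument, conjugate symmetric, positive definite), complete for the
induced norm.\<close>

definition hnorm :: "('a \<Rightarrow> 'a \<Rightarrow> complex) \<Rightarrow> 'a \<Rightarrow> real" where
  "hnorm ip x = sqrt (Re (ip x x))"

definition complex_hilbert_space ::
  "(complex \<Rightarrow> 'a::ab_group_add \<Rightarrow> 'a) \<Rightarrow> ('a \<Rightarrow> 'a \<Rightarrow> complex) \<Rightarrow> bool" where
  "complex_hilbert_space sc ip \<longleftrightarrow>
     (\<forall>a b x. sc a (sc b x) = sc (a * b) x) \<and>
     (\<forall>x. sc 1 x = x) \<and>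
     (\<forall>a x y. sc a (x + y) = sc a x + sc a y) \<and>
     (\<forall>a b x. sc (a + b) x = sc a x + sc b x) \<and>
     (\<forall>x y z. ip (x + y) z = ip x z + ip y z) \<and>
     (\<forall>a x y. ip (sc a x) y = a * ip x y) \<and>
     (\<forall>x y. ip y x = cnj (ip x y)) \<and>
     (\<forall>x. 0 \<le> Re (ip x x)) \<and>
     (\<forall>x. ip x x = 0 \<longrightarrow> x = 0) \<and>
     (\<forall>s::nat \<Rightarrow> 'a. (\<forall>e>0. \<exists>M. \<forall>m\<ge>M. \<forall>n\<ge>M. hnorm ip (s m - s n) < e) \<longrightarrow>
        (\<exists>x. (\<lambda>n. hnorm ip (s n - x)) \<longlonglongrightarrow> 0))"

definition hseparable :: "('a::ab_group_add \<Rightarrow> 'a \<Rightarrow> complex) \<Rightarrow> bool" where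
  "hseparable ip \<longleftrightarrow> (\<exists>D. countable D \<and> (\<forall>x. \<forall>e>0. \<exists>d\<in>D. hnorm ip (x - d) < e))"

definition orthonormal_basis :: "('a::ab_group_add \<Rightarrow> 'a \<Rightarrow> complex) \<Rightarrow> (nat \<Rightarrow> 'a) \<Rightarrow> bool" where
  "orthonormal_basis ip v \<longleftrightarrow>
     (\<forall>i j. ip (v i) (v j) = (if i = j then 1 else 0)) \<and>
     (\<forall>f. (\<forall>j. ip f (v j) = 0) \<longrightarrow> f = 0)"

definition lsum :: "(complex \<Rightarrow> 'a::ab_group_add \<Rightarrow> 'a) \<Rightarrow> nat \<Rightarrow> (nat \<Rightarrow> complex) \<Rightarrow> (nat \<Rightarrow> 'a) \<Rightarrow> 'a" where
  "lsum sc n c u = (\<Sum>j<n. sc (c j) (u j))"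

definition fspan :: "(complex \<Rightarrow> 'a::ab_group_add \<Rightarrow> 'a) \<Rightarrow> nat \<Rightarrow> (nat \<Rightarrow> 'a) \<Rightarrow> 'a set" where
  "fspan sc n u = {lsum sc n c u | c. True}"

definition is_basis_of :: "(complex \<Rightarrow> 'a::ab_group_add \<Rightarrow> 'a) \<Rightarrow> nat \<Rightarrow> (nat \<Rightarrow> 'a) \<Rightarrow> 'a set \<Rightarrow> bool" where
  "is_basis_of sc n u M \<longleftrightarrow>
     (\<forall>c. lsum sc n c u = 0 \<longrightarrow> (\<forall>j<n. c j = 0)) \<and> fspan sc n u = M"

definition orth_compl :: "('a \<Rightarrow> 'a \<Rightarrow> complex) \<Rightarrow> 'a set \<Rightarrow> 'a set" where
  "orth_compl ip M = {x. \<forall>m\<in>M. ip x m = 0}"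

definition orth_proj :: "('a::ab_group_add \<Rightarrow> 'a \<Rightarrow> complex) \<Rightarrow> 'a set \<Rightarrow> 'a \<Rightarrow> 'a" where
  "orth_proj ip M x = (THE y. y \<in> M \<and> (\<forall>m\<in>M. ip (x - y) m = 0))"

definition riesz_basis :: "(complex \<Rightarrow> 'a::ab_group_add \<Rightarrow> 'a) \<Rightarrow> ('a \<Rightarrow> 'a \<Rightarrow> complex) \<Rightarrow> (nat \<Rightarrow> 'a) \<Rightarrow> bool" where
  "riesz_basis sc ip u \<longleftrightarrow> (\<exists>A B. 0 < A \<and> A \<le> B \<and>
     (\<forall>f. summable (\<lambda>j. (cmod (ip f (u j)))\<^sup>2) \<and>
          A * (hnorm ip f)\<^sup>2 \<le> (\<Sum>j. (cmod (ip f (u j)))\<^sup>2) \<and>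
          (\<Sum>j. (cmod (ip f (u j)))\<^sup>2) \<le> B * (hnorm ip f)\<^sup>2) \<and>
     (\<forall>n a. A * (\<Sum>j<n. (cmod (a j))\<^sup>2) \<le> (hnorm ip (lsum sc n a u))\<^sup>2 \<and>
            (hnorm ip (lsum sc n a u))\<^sup>2 \<le> B * (\<Sum>j<n. (cmod (a j))\<^sup>2)))"

text \<open>Optimal frame constants: inf / sup of the squared norm of finite combinations with
unit coefficient norm.\<close>
definition riesz_values :: "(complex \<Rightarrow> 'a::ab_group_add \<Rightarrow> 'a) \<Rightarrow> ('a \<Rightarrow> 'a \<Rightarrow> complex) \<Rightarrow> (nat \<Rightarrow> 'a) \<Rightarrow> real set" where
  "riesz_values sc ip u = {(hnorm ip (lsum sc n a u))\<^sup>2 | n a. (\<Sum>j<n. (cmod (a j))\<^sup>2) = 1}"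

definition opt_upper :: "(complex \<Rightarrow> 'a::ab_group_add \<Rightarrow> 'a) \<Rightarrow> ('a \<Rightarrow> 'a \<Rightarrow> complex) \<Rightarrow> (nat \<Rightarrow> 'a) \<Rightarrow> real" where
  "opt_upper sc ip u = Sup (riesz_values sc ip u)"

definition opt_lower :: "(complex \<Rightarrow> 'a::ab_group_add \<Rightarrow> 'a) \<Rightarrow> ('a \<Rightarrow> 'a \<Rightarrow> complex) \<Rightarrow> (nat \<Rightarrow> 'a) \<Rightarrow> real" where
  "opt_lower sc ip u = Inf (riesz_values sc ip u)"

text \<open>N x N matrices and vectors of C^N are functions restricted to indices < N.\<close>
definition gram :: "('a \<Rightarrow> 'a \<Rightarrow> complex) \<Rightarrow> (nat \<Rightarrow> 'a) \<Rightarrow> nat \<Rightarrow> nat \<Rightarrow> complex" where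
  "gram ip x i j = ip (x i) (x j)"

text \<open>The Hermitian form <U c, c> (real for Hermitian U, so we take the real part).\<close>
definition qform :: "nat \<Rightarrow> (nat \<Rightarrow> nat \<Rightarrow> complex) \<Rightarrow> (nat \<Rightarrow> complex) \<Rightarrow> real" where
  "qform N U c = Re (\<Sum>i<N. (\<Sum>j<N. U i j * c j) * cnj (c i))"

definition vnorm2 :: "nat \<Rightarrow> (nat \<Rightarrow> complex) \<Rightarrow> real" where
  "vnorm2 N c = (\<Sum>j<N. (cmod (c j))\<^sup>2)"

definition mat_eigenvalue :: "nat \<Rightarrow> (nat \<Rightarrow> nat \<Rightarrow> complex) \<Rightarrow> complex \<Rightarrow> bool" where
  "mat_eigenvalue N U \<mu> \<longleftrightarrow>
     (\<exists>c. (\<exists>i<N. c i \<noteq> 0) \<and> (\<forall>i<N. (\<Sum>j<N. U i j * c j) = \<mu> * c i))"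

text \<open>Largest / smallest eigenvalue (the eigenvalues of a Hermitian matrix are real).\<close>
definition max_eig :: "nat \<Rightarrow> (nat \<Rightarrow> nat \<Rightarrow> complex) \<Rightarrow> real" where
  "max_eig N U = Max {r. mat_eigenvalue N U (complex_of_real r)}"

definition min_eig :: "nat \<Rightarrow> (nat \<Rightarrow> nat \<Rightarrow> complex) \<Rightarrow> real" where
  "min_eig N U = Min {r. mat_eigenvalue N U (complex_of_real r)}"

end

theory Submission
  imports Defs "HOL-Analysis.Analysis" "Jordan_Normal_Form.Char_Poly"
begin

text \<open>Let \<open>p'\<close> and \<open>p''\<close> be the projections onto \<open>H' = span {v\<^sub>0, \<dots>, v\<^bsub>N-1\<^esub>}\<close> and its
  orthogonal complement (indices start at 0 here).  Split a combination \<open>x = \<Sum>\<^sub>j a\<^sub>j BB\<^sub>j\<close> with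
  \<open>\<Sum>\<^sub>j \<bar>a\<^sub>j\<bar>\<^sup>2 = 1\<close> into its first \<open>N\<close> coefficients \<open>c\<close> and the tail
  \<open>t = \<Sum>\<^bsub>j\<ge>N\<^esub> a\<^sub>j v\<^sub>j \<in> H''\<close>.  Then \<open>p'(x) = \<Sum>\<^bsub>j<N\<^esub> c\<^sub>j p'(w\<^sub>j)\<close> and \<open>p''(x) = y + t\<close> with
  \<open>y = \<Sum>\<^bsub>j<N\<^esub> c\<^sub>j p''(w\<^sub>j)\<close>, so \<open>\<parallel>x\<parallel>\<^sup>2 = \<langle>U'c, c\<rangle> + \<parallel>y + t\<parallel>\<^sup>2\<close>, where \<open>\<parallel>y\<parallel>\<^sup>2 = \<langle>U''c, c\<rangle>\<close>
  and \<open>\<parallel>t\<parallel>\<^sup>2 = 1 - \<bar>c\<bar>\<^sup>2\<close>.  The triangle inequality bounds \<open>\<parallel>y + t\<parallel>\<^sup>2\<close> by the squares in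
  \<open>F\<close> and \<open>G\<close>, and both bounds are approached by a tail \<open>t\<close> almost parallel or antiparallel
  to \<open>y\<close>, which exists because \<open>y \<in> H''\<close> is the limit of its partial expansions in
  \<open>v\<^sub>N, v\<^bsub>N+1\<^esub>, \<dots>\<close>.  Compactness of the unit ball of \<open>\<complex>\<^sup>N\<close> turns the optimal constants into
  a maximum of \<open>F\<close> and a minimum of \<open>G\<close>.

  For \<open>BBt\<close> the vector \<open>y\<close> disappears and \<open>\<parallel>x\<parallel>\<^sup>2 = \<langle>U'c, c\<rangle> + 1 - \<bar>c\<bar>\<^sup>2\<close>, whose extreme values
  are \<open>max \<Lambda> 1\<close> and \<open>\<lambda>\<close> by the Rayleigh characterisation of the extreme eigenvalues of the
  positive definite matrix \<open>U'\<close>; note \<open>\<lambda> \<le> \<parallel>p'(w\<^sub>j)\<parallel>\<^sup>2 \<le> 1\<close>.  The analysis inequalities of both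
  systems follow from Parseval's identity, since the \<open>p'(w\<^sub>j)\<close> span \<open>H'\<close>.\<close>

section \<open>Complex Hilbert spaces given by an inner product\<close>

lemma Re_mult_cnj: "Re (z * cnj z) = (cmod z)\<^sup>2"
  by (simp only: complex_norm_square[symmetric] Re_complex_of_real)

lemma Re_cnj_mult: "Re (cnj z * z) = (cmod z)\<^sup>2"
  by (simp only: mult.commute[of "cnj z"] Re_mult_cnj)

lemma Re_of_real_mult_cnj: "Re (complex_of_real r * z * cnj z) = r * (cmod z)\<^sup>2"
  by (simp only: mult.assoc complex_norm_square[symmetric] of_real_mult[symmetric] Re_complex_of_real)

lemma cmod_sum_mult_power2_le:
  "(cmod (\<Sum>j\<in>S. a j * b j))\<^sup>2 \<le> (\<Sum>j\<in>S. (cmod (a j))\<^sup>2) * (\<Sum>j\<in>S. (cmod (b j))\<^sup>2)"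
proof -
  have "cmod (\<Sum>j\<in>S. a j * b j) \<le> (\<Sum>j\<in>S. cmod (a j) * cmod (b j))"
    by (rule order_trans[OF norm_sum]) (simp add: norm_mult)
  hence "(cmod (\<Sum>j\<in>S. a j * b j))\<^sup>2 \<le> (\<Sum>j\<in>S. cmod (a j) * cmod (b j))\<^sup>2"
    by (rule power_mono) simp
  also have "\<dots> \<le> (\<Sum>j\<in>S. (cmod (a j))\<^sup>2) * (\<Sum>j\<in>S. (cmod (b j))\<^sup>2)"
    by (rule Cauchy_Schwarz_ineq_sum)
  finally show ?thesis .
qed

lemma cmod_power2_le_add: "(cmod a)\<^sup>2 \<le> 2 * (cmod (a + b))\<^sup>2 + 2 * (cmod b)\<^sup>2"
proof -
  have "cmod a \<le> cmod (a + b) + cmod b"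
    using norm_triangle_ineq4[of "a + b" b] by simp
  hence "(cmod a)\<^sup>2 \<le> (cmod (a + b) + cmod b)\<^sup>2"
    by (rule power_mono) simp
  also have "\<dots> \<le> 2 * (cmod (a + b))\<^sup>2 + 2 * (cmod b)\<^sup>2"
    using sum_squares_ge_zero[of "cmod (a + b) - cmod b" 0] by (simp add: power2_eq_square algebra_simps)
  finally show ?thesis .
qed

definition hnorm2 :: "('a \<Rightarrow> 'a \<Rightarrow> complex) \<Rightarrow> 'a \<Rightarrow> real" where
  "hnorm2 ip x = Re (ip x x)"

locale complex_hilbert =
  fixes sc :: "complex \<Rightarrow> 'a::ab_group_add \<Rightarrow> 'a" and ip :: "'a \<Rightarrow> 'a \<Rightarrow> complex"
  assumes sc_assoc: "sc a (sc b x) = sc (a * b) x"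
    and sc_one [simp]: "sc 1 x = x"
    and sc_add_right: "sc a (x + y) = sc a x + sc a y"
    and sc_add_left: "sc (a + b) x = sc a x + sc b x"
    and ip_add_left: "ip (x + y) z = ip x z + ip y z"
    and ip_sc_left: "ip (sc a x) y = a * ip x y"
    and ip_conj: "ip y x = cnj (ip x y)"
    and ip_self_nonneg: "0 \<le> Re (ip x x)"
    and ip_self_eq_0: "ip x x = 0 \<Longrightarrow> x = 0"
    and complete: "\<forall>e>0. \<exists>M. \<forall>m\<ge>M. \<forall>n\<ge>M. hnorm ip (s m - s n) < e \<Longrightarrow>
      \<exists>x. (\<lambda>n. hnorm ip (s n - x)) \<longlonglongrightarrow> 0"

lemma complex_hilbert_space_iff: "complex_hilbert_space sc ip \<longleftrightarrow> complex_hilbert sc ip"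
  unfolding complex_hilbert_space_def complex_hilbert_def
  by (simp only: conj_assoc all_comm[of "\<lambda>x y. ip y x = cnj (ip x y)"])

context complex_hilbert
begin

lemma sc_zero_right [simp]: "sc a 0 = 0"
  using sc_add_right[of a 0 0] by simp

lemma sc_zero_left [simp]: "sc 0 x = 0"
  using sc_add_left[of 0 0 x] by simp

lemma sc_minus_right: "sc a (- x) = - sc a x"
  using minus_unique[of "sc a x" "sc a (-x)"] sc_add_right[of a x "-x"] by simp

lemma sc_diff_right: "sc a (x - y) = sc a x - sc a y"
  using sc_add_right[of a x "-y"] sc_minus_right by simp

lemma sc_minus_left: "sc (- a) x = - sc a x"
  using minus_unique[of "sc a x" "sc (-a) x"] sc_add_left[of a "-a" x] by simp

lemma sc_diff_left: "sc (a - b) x = sc a x - sc b x"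
  using sc_add_left[of a "-b" x] sc_minus_left by simp

lemma sc_sum_right: "sc a (\<Sum>i\<in>S. f i) = (\<Sum>i\<in>S. sc a (f i))"
  by (induction S rule: infinite_finite_induct) (auto simp: sc_add_right)

lemma ip_zero_left [simp]: "ip 0 y = 0"
  using ip_add_left[of 0 0 y] by simp

lemma ip_minus_left: "ip (- x) y = - ip x y"
  using minus_unique[of "ip x y" "ip (-x) y"] ip_add_left[of x "-x" y] by simp

lemma ip_diff_left: "ip (x - y) z = ip x z - ip y z"
  using ip_add_left[of x "-y" z] ip_minus_left by simp

lemma ip_sum_left: "ip (\<Sum>i\<in>S. f i) y = (\<Sum>i\<in>S. ip (f i) y)"
  by (induction S rule: infinite_finite_induct) (auto simp: ip_add_left)

lemma ip_add_right: "ip x (y + z) = ip x y + ip x z"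
  by (subst (1 2 3) ip_conj) (simp add: ip_add_left)

lemma ip_sc_right: "ip x (sc a y) = cnj a * ip x y"
  by (subst (1 2) ip_conj) (simp add: ip_sc_left)

lemma ip_zero_right [simp]: "ip x 0 = 0"
  by (subst ip_conj) simp

lemma ip_minus_right: "ip x (- y) = - ip x y"
  by (subst (1 2) ip_conj) (simp add: ip_minus_left)

lemma ip_diff_right: "ip x (y - z) = ip x y - ip x z"
  by (subst (1 2 3) ip_conj) (simp add: ip_diff_left)

lemma ip_sum_right: "ip x (\<Sum>i\<in>S. f i) = (\<Sum>i\<in>S. ip x (f i))"
  by (induction S rule: infinite_finite_induct) (auto simp: ip_add_right)

lemma ip_eq_0_sym: "ip x y = 0 \<Longrightarrow> ip y x = 0"
  by (subst ip_conj) simp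

lemma ip_self_real: "ip x x = complex_of_real (hnorm2 ip x)"
proof -
  have "Im (ip x x) = Im (cnj (ip x x))"
    using ip_conj[of x x] by (rule arg_cong)
  hence "Im (ip x x) = 0" by simp
  thus ?thesis unfolding hnorm2_def by (intro complex_eqI) auto
qed

lemma hnorm2_nonneg: "0 \<le> hnorm2 ip x"
  unfolding hnorm2_def by (rule ip_self_nonneg)

lemma hnorm_power2: "(hnorm ip x)\<^sup>2 = hnorm2 ip x"
  unfolding hnorm_def hnorm2_def using ip_self_nonneg by simp

lemma hnorm_nonneg: "0 \<le> hnorm ip x"
  unfolding hnorm_def using ip_self_nonneg by simp

lemma hnorm2_eq_0_iff: "hnorm2 ip x = 0 \<longleftrightarrow> x = 0"
  using ip_self_real ip_self_eq_0 by (metis of_real_eq_0_iff ip_zero_left hnorm2_def zero_complex.simps(1))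

lemma hnorm2_zero [simp]: "hnorm2 ip 0 = 0"
  by (simp add: hnorm2_def)

lemma Re_ip_commute: "Re (ip y x) = Re (ip x y)"
  by (subst ip_conj) simp

lemma hnorm2_add: "hnorm2 ip (x + y) = hnorm2 ip x + hnorm2 ip y + 2 * Re (ip x y)"
  using Re_ip_commute[of y x] unfolding hnorm2_def by (simp add: ip_add_left ip_add_right)

lemma hnorm2_diff: "hnorm2 ip (x - y) = hnorm2 ip x + hnorm2 ip y - 2 * Re (ip x y)"
  using Re_ip_commute[of y x] unfolding hnorm2_def by (simp add: ip_diff_left ip_diff_right)

lemma hnorm2_minus: "hnorm2 ip (- x) = hnorm2 ip x"
  by (simp add: hnorm2_def ip_minus_left ip_minus_right)

lemma hnorm2_sc: "hnorm2 ip (sc a x) = (cmod a)\<^sup>2 * hnorm2 ip x"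
proof -
  have "ip (sc a x) (sc a x) = (a * cnj a) * ip x x"
    by (simp add: ip_sc_left ip_sc_right mult.assoc)
  thus ?thesis unfolding hnorm2_def complex_norm_square[symmetric] by (simp del: of_real_power)
qed

lemma cauchy_schwarz: "(cmod (ip x y))\<^sup>2 \<le> hnorm2 ip x * hnorm2 ip y"
proof (cases "y = 0")
  case True
  thus ?thesis by simp
next
  case False
  define Y where "Y = hnorm2 ip y"
  have Y: "Y > 0"
    using False hnorm2_eq_0_iff hnorm2_nonneg unfolding Y_def by (metis less_eq_real_def)
  define p where "p = ip x y"
  define t where "t = p / complex_of_real Y"
  have "0 \<le> hnorm2 ip (x - sc t y)" by (rule hnorm2_nonneg)
  also have "\<dots> = hnorm2 ip x + (cmod t)\<^sup>2 * Y - 2 * Re (cnj t * p)"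
    by (simp add: hnorm2_diff hnorm2_sc ip_sc_right Y_def p_def)
  also have "(cmod t)\<^sup>2 * Y = (cmod p)\<^sup>2 / Y"
    using Y by (simp add: t_def norm_divide power_divide power2_eq_square)
  also have "cnj t * p = complex_of_real ((cmod p)\<^sup>2 / Y)"
    using complex_norm_square[of p] by (simp add: t_def mult.commute)
  finally have "(cmod p)\<^sup>2 / Y \<le> hnorm2 ip x" by simp
  thus ?thesis using Y unfolding p_def Y_def by (simp add: divide_le_eq)
qed

lemma abs_Re_ip_le: "\<bar>Re (ip x y)\<bar> \<le> sqrt (hnorm2 ip x) * sqrt (hnorm2 ip y)"
proof -
  have "\<bar>Re (ip x y)\<bar> \<le> sqrt ((cmod (ip x y))\<^sup>2)"
    using abs_Re_le_cmod by simp
  also have "\<dots> \<le> sqrt (hnorm2 ip x * hnorm2 ip y)"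
    using cauchy_schwarz real_sqrt_le_mono by blast
  finally show ?thesis by (simp add: real_sqrt_mult)
qed

lemma cmod_ip_power2_le: "hnorm2 ip y \<le> 1 \<Longrightarrow> (cmod (ip x y))\<^sup>2 \<le> hnorm2 ip x"
  using cauchy_schwarz[of x y] hnorm2_nonneg[of x] by (meson mult_left_le order_trans)

lemma hnorm2_add_ge: "(sqrt (hnorm2 ip x) - sqrt (hnorm2 ip y))\<^sup>2 \<le> hnorm2 ip (x + y)"
  and hnorm2_add_le: "hnorm2 ip (x + y) \<le> (sqrt (hnorm2 ip x) + sqrt (hnorm2 ip y))\<^sup>2"
  using abs_Re_ip_le[of x y] hnorm2_nonneg[of x] hnorm2_nonneg[of y]
  by (simp_all add: hnorm2_add power2_diff power2_sum)

lemma orth_proj_eqI: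
  assumes "\<And>a b. a \<in> M \<Longrightarrow> b \<in> M \<Longrightarrow> a - b \<in> M"
    and "y \<in> M" "\<And>m. m \<in> M \<Longrightarrow> ip (x - y) m = 0"
  shows "orth_proj ip M x = y"
  unfolding orth_proj_def
proof (rule the_equality)
  show "y \<in> M \<and> (\<forall>m\<in>M. ip (x - y) m = 0)" using assms by blast
  fix z assume z: "z \<in> M \<and> (\<forall>m\<in>M. ip (x - z) m = 0)"
  have "z - y \<in> M" using assms z by blast
  hence "ip (z - y) (z - y) = 0"
    using assms z ip_diff_left[of "x - y" "x - z" "z - y"] by simp
  thus "z = y" using ip_self_eq_0[of "z - y"] by simp
qed

end

section \<open>Expansion in an orthonormal basis\<close>

locale hilbert_onb = complex_hilbert sc ip for sc :: "complex \<Rightarrow> 'a::ab_group_add \<Rightarrow> 'a" and ip +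
  fixes v :: "nat \<Rightarrow> 'a"
  assumes onb: "orthonormal_basis ip v"
begin

lemma ip_onb: "ip (v i) (v j) = (if i = j then 1 else 0)"
  using onb unfolding orthonormal_basis_def by blast

lemma onb_complete: "(\<And>j. ip f (v j) = 0) \<Longrightarrow> f = 0"
  using onb unfolding orthonormal_basis_def by blast

lemma ip_comb_onb:
  "finite S \<Longrightarrow> ip (\<Sum>j\<in>S. sc (a j) (v j)) (v k) = (if k \<in> S then a k else 0)"
  by (simp add: ip_sum_left ip_sc_left ip_onb if_distrib sum.delta cong: if_cong)

lemma hnorm2_comb_onb:
  assumes "finite S"
  shows "hnorm2 ip (\<Sum>j\<in>S. sc (a j) (v j)) = (\<Sum>j\<in>S. (cmod (a j))\<^sup>2)"
proof -
  have "ip (\<Sum>j\<in>S. sc (a j) (v j)) (\<Sum>j\<in>S. sc (a j) (v j)) = (\<Sum>j\<in>S. cnj (a j) * a j)"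
    by (auto simp: ip_sum_right ip_sc_right ip_comb_onb assms intro!: sum.cong)
  thus ?thesis unfolding hnorm2_def by (simp only: Re_sum Re_cnj_mult)
qed

lemma hnorm2_onb [simp]: "hnorm2 ip (v j) = 1"
  by (simp add: hnorm2_def ip_onb)

definition proj :: "nat \<Rightarrow> 'a \<Rightarrow> 'a" where
  "proj n x = (\<Sum>j<n. sc (ip x (v j)) (v j))"

lemma hnorm2_proj: "hnorm2 ip (proj n x) = (\<Sum>j<n. (cmod (ip x (v j)))\<^sup>2)"
  unfolding proj_def by (simp add: hnorm2_comb_onb)

lemma ip_proj_onb: "ip (proj n x) (v k) = (if k < n then ip x (v k) else 0)"
  unfolding proj_def by (simp add: ip_comb_onb)

lemma ip_residual_onb: "ip (x - proj n x) (v k) = (if k < n then 0 else ip x (v k))"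
  by (simp add: ip_diff_left ip_proj_onb)

lemma proj_add: "proj n (x + y) = proj n x + proj n y"
  unfolding proj_def by (simp add: ip_add_left sc_add_left sum.distrib)

lemma proj_sc: "proj n (sc a x) = sc a (proj n x)"
  unfolding proj_def by (simp add: ip_sc_left sc_sum_right sc_assoc)

lemma proj_zero [simp]: "proj n 0 = 0"
  by (simp add: proj_def)

lemma proj_sum: "proj n (\<Sum>i\<in>S. f i) = (\<Sum>i\<in>S. proj n (f i))"
  by (induction S rule: infinite_finite_induct) (auto simp: proj_add)

lemma proj_onb: "proj n (v k) = (if k < n then v k else 0)"
proof -
  have "sc (ip (v k) (v j)) (v j) = (if j = k then v k else 0)" for j
    by (simp add: ip_onb)
  thus ?thesis unfolding proj_def by (simp add: sum.delta')
qed

lemma proj_idem: "proj n (proj n x) = proj n x"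
  unfolding proj_def[of n "proj n x"] ip_proj_onb by (simp add: proj_def)

lemma proj_in_fspan: "proj n x \<in> fspan sc n v"
  unfolding fspan_def lsum_def proj_def by (intro CollectI exI[of _ "\<lambda>j. ip x (v j)"]) simp

lemma ip_residual_fspan: "m \<in> fspan sc n v \<Longrightarrow> ip (x - proj n x) m = 0"
  unfolding fspan_def lsum_def by (auto simp: ip_sum_right ip_sc_right ip_residual_onb)

lemma ip_proj_residual: "ip (proj n x) (y - proj n y) = 0"
  using ip_eq_0_sym[OF ip_residual_fspan[OF proj_in_fspan]] .

lemma ip_residual_proj: "ip (y - proj n y) (proj n x) = 0"
  using ip_residual_fspan[OF proj_in_fspan] .

lemma hnorm2_proj_residual: "hnorm2 ip x = hnorm2 ip (proj n x) + hnorm2 ip (x - proj n x)"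
  using hnorm2_add[of "proj n x" "x - proj n x"] by (simp add: ip_proj_residual)

lemma hnorm2_proj_le: "hnorm2 ip (proj n x) \<le> hnorm2 ip x"
  using hnorm2_proj_residual[of x n] hnorm2_nonneg[of "x - proj n x"] by linarith

lemma hnorm2_residual_le: "hnorm2 ip (x - proj n x) \<le> hnorm2 ip x"
  using hnorm2_proj_residual[of x n] hnorm2_nonneg[of "proj n x"] by linarith

lemma Re_ip_proj: "Re (ip x (proj n x)) = hnorm2 ip (proj n x)"
  using ip_residual_proj[of x n x] unfolding hnorm2_def by (simp add: ip_diff_left)

lemma ip_residual_residual: "ip (x - proj n x) (y - proj n y) = ip x (y - proj n y)"
  using ip_proj_residual[of n x y] by (simp add: ip_diff_left)

subsection \<open>Parseval's identity\<close>

lemma summable_coeffs: "summable (\<lambda>j. (cmod (ip x (v j)))\<^sup>2)"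
  by (rule summableI_nonneg_bounded[of _ "hnorm2 ip x"]) (auto simp: hnorm2_proj[symmetric] hnorm2_proj_le)

lemma hnorm2_proj_diff:
  "hnorm2 ip (proj m x - proj n x) = \<bar>(\<Sum>j<m. (cmod (ip x (v j)))\<^sup>2) - (\<Sum>j<n. (cmod (ip x (v j)))\<^sup>2)\<bar>"
proof -
  have *: "hnorm2 ip (proj m x - proj n x) = (\<Sum>j<m. (cmod (ip x (v j)))\<^sup>2) - (\<Sum>j<n. (cmod (ip x (v j)))\<^sup>2)"
    if "n \<le> m" for m n
  proof -
    have split: "{..<m} = {..<n} \<union> {n..<m}" "{..<n} \<inter> {n..<m} = {}"
      using that by auto
    have "proj m x - proj n x = (\<Sum>j\<in>{n..<m}. sc (ip x (v j)) (v j))"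
      unfolding proj_def split(1) by (simp add: sum.union_disjoint[OF _ _ split(2)])
    thus ?thesis
      unfolding split(1) by (simp add: hnorm2_comb_onb sum.union_disjoint[OF _ _ split(2)])
  qed
  show ?thesis
  proof (cases "n \<le> m")
    case True
    thus ?thesis using *[OF True] hnorm2_nonneg by (metis abs_of_nonneg)
  next
    case False
    hence "hnorm2 ip (proj m x - proj n x) = hnorm2 ip (proj n x - proj m x)"
      using hnorm2_minus[of "proj n x - proj m x"] by simp
    thus ?thesis using *[of m n] False hnorm2_nonneg by (metis abs_minus_commute abs_of_nonneg nat_le_linear)
  qed
qed

lemma proj_Cauchy: "\<forall>e>0. \<exists>M. \<forall>m\<ge>M. \<forall>n\<ge>M. hnorm ip (proj m x - proj n x) < e"
proof (intro allI impI)
  fix e :: real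
  assume e: "e > 0"
  have "Cauchy (\<lambda>n. \<Sum>j<n. (cmod (ip x (v j)))\<^sup>2)"
    using summable_coeffs[of x] by (simp add: Cauchy_convergent_iff summable_iff_convergent)
  then obtain M where M: "\<And>m n. m \<ge> M \<Longrightarrow> n \<ge> M \<Longrightarrow>
      \<bar>(\<Sum>j<m. (cmod (ip x (v j)))\<^sup>2) - (\<Sum>j<n. (cmod (ip x (v j)))\<^sup>2)\<bar> < e\<^sup>2"
    using CauchyD[of _ "e\<^sup>2"] e by (metis real_norm_def zero_less_power)
  have "hnorm ip (proj m x - proj n x) < e" if "m \<ge> M" "n \<ge> M" for m n
  proof -
    have "sqrt (hnorm2 ip (proj m x - proj n x)) < sqrt (e\<^sup>2)"
      unfolding hnorm2_proj_diff using M[OF that] by (rule real_sqrt_less_mono)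
    thus ?thesis using e by (simp add: hnorm_def hnorm2_def)
  qed
  thus "\<exists>M. \<forall>m\<ge>M. \<forall>n\<ge>M. hnorm ip (proj m x - proj n x) < e" by blast
qed

lemma hnorm2_residual_tendsto: "(\<lambda>n. hnorm2 ip (x - proj n x)) \<longlonglongrightarrow> 0"
proof -
  obtain y where y: "(\<lambda>n. hnorm ip (proj n x - y)) \<longlonglongrightarrow> 0"
    using complete[OF proj_Cauchy] by blast
  have "ip (x - y) (v k) = 0" for k
  proof -
    have "cmod (ip (x - y) (v k)) \<le> hnorm ip (proj n x - y)" if "n > k" for n
    proof -
      have "ip (x - y) (v k) = ip (proj n x - y) (v k)"
        using that by (simp add: ip_diff_left ip_proj_onb)
      moreover have "(cmod (ip (proj n x - y) (v k)))\<^sup>2 \<le> (hnorm ip (proj n x - y))\<^sup>2"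
        using cauchy_schwarz[of "proj n x - y" "v k"] by (simp add: hnorm_power2 hnorm2_def ip_onb)
      ultimately show ?thesis by (simp add: power2_le_imp_le[OF _ hnorm_nonneg])
    qed
    hence "cmod (ip (x - y) (v k)) \<le> 0"
      by (intro LIMSEQ_le_const[OF y]) (auto intro!: exI[of _ "Suc k"])
    thus ?thesis by simp
  qed
  hence "x = y" using onb_complete[of "x - y"] by simp
  moreover have "hnorm2 ip (x - proj n x) = (hnorm ip (proj n x - x))\<^sup>2" for n
    using hnorm2_minus[of "proj n x - x"] by (simp add: hnorm_power2)
  ultimately show ?thesis using tendsto_power[OF y, of 2] by simp
qed

lemma parseval: "(\<lambda>j. (cmod (ip x (v j)))\<^sup>2) sums hnorm2 ip x"
proof -
  have "(\<lambda>n. hnorm2 ip x - hnorm2 ip (x - proj n x)) \<longlonglongrightarrow> hnorm2 ip x - 0"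
    by (intro tendsto_diff tendsto_const hnorm2_residual_tendsto)
  moreover have "hnorm2 ip x - hnorm2 ip (x - proj n x) = (\<Sum>j<n. (cmod (ip x (v j)))\<^sup>2)" for n
    using hnorm2_proj_residual[of x n] by (simp add: hnorm2_proj)
  ultimately show ?thesis unfolding sums_def by simp
qed

lemma fspan_diff_closed: "a \<in> fspan sc n v \<Longrightarrow> b \<in> fspan sc n v \<Longrightarrow> a - b \<in> fspan sc n v"
proof -
  assume "a \<in> fspan sc n v" "b \<in> fspan sc n v"
  then obtain c d where "a = lsum sc n c v" "b = lsum sc n d v"
    unfolding fspan_def by blast
  hence "a - b = lsum sc n (\<lambda>j. c j - d j) v"
    unfolding lsum_def by (simp add: sc_diff_left sum_subtractf)
  thus ?thesis unfolding fspan_def by blast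
qed

lemma orth_proj_fspan: "orth_proj ip (fspan sc n v) x = proj n x"
  by (rule orth_proj_eqI[OF fspan_diff_closed proj_in_fspan ip_residual_fspan])

lemma orth_proj_orth_compl_fspan: "orth_proj ip (orth_compl ip (fspan sc n v)) x = x - proj n x"
proof (rule orth_proj_eqI)
  show "a - b \<in> orth_compl ip (fspan sc n v)"
    if "a \<in> orth_compl ip (fspan sc n v)" "b \<in> orth_compl ip (fspan sc n v)" for a b
    using that unfolding orth_compl_def by (simp add: ip_diff_left)
  show "x - proj n x \<in> orth_compl ip (fspan sc n v)"
    unfolding orth_compl_def using ip_residual_fspan by blast
  show "ip (x - (x - proj n x)) m = 0" if "m \<in> orth_compl ip (fspan sc n v)" for m
    using that proj_in_fspan unfolding orth_compl_def by (simp add: ip_eq_0_sym)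
qed

lemma sqrt_hnorm2_proj_close:
  assumes "\<eta> > 0"
  obtains n where "n \<ge> N" "\<bar>sqrt (hnorm2 ip (proj n y)) - sqrt (hnorm2 ip y)\<bar> < \<eta>"
proof -
  have "(\<lambda>n. sqrt (hnorm2 ip (proj n y))) \<longlonglongrightarrow> sqrt (hnorm2 ip y)"
    using parseval[of y] unfolding sums_def hnorm2_proj[symmetric] by (rule tendsto_real_sqrt)
  then obtain n0 where "\<And>n. n \<ge> n0 \<Longrightarrow> \<bar>sqrt (hnorm2 ip (proj n y)) - sqrt (hnorm2 ip y)\<bar> < \<eta>"
    using assms unfolding LIMSEQ_iff by (metis real_norm_def)
  thus ?thesis using that[of "max n0 N"] by simp
qed

lemma hnorm2_add_sc_proj:
  "hnorm2 ip (y + sc (complex_of_real t) (proj n y)) = hnorm2 ip y + (t\<^sup>2 + 2 * t) * hnorm2 ip (proj n y)"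
  by (simp add: hnorm2_add hnorm2_sc ip_sc_right Re_ip_proj algebra_simps)

text \<open>A vector \<open>y \<bottom> v\<^sub>0, \<dots>, v\<^bsub>N-1\<^esub>\<close> can be complemented by a combination \<open>z\<close> of
  \<open>v\<^sub>N, v\<^bsub>N+1\<^esub>, \<dots>\<close> of norm \<open>r\<close> that is almost parallel (\<open>\<sigma> = 1\<close>) or antiparallel
  (\<open>\<sigma> = -1\<close>) to \<open>y\<close>: take \<open>z\<close> proportional to a long partial expansion of \<open>y\<close>.\<close>

lemma aligned_comb_exists:
  assumes y: "\<And>j. j < N \<Longrightarrow> ip y (v j) = 0" and r: "0 \<le> r" and \<sigma>: "\<sigma>\<^sup>2 = 1" and e: "e > 0"
  obtains n b where "N \<le> n" "\<And>j. j < N \<Longrightarrow> b j = 0"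
    "hnorm2 ip (\<Sum>j<n. sc (b j) (v j)) = r\<^sup>2"
    "\<bar>hnorm2 ip (y + (\<Sum>j<n. sc (b j) (v j))) - (hnorm2 ip y + r\<^sup>2 + 2 * \<sigma> * r * sqrt (hnorm2 ip y))\<bar> \<le> e"
proof (cases "y = 0")
  case True
  define b where "b = (\<lambda>j. if j = N then complex_of_real r else 0)"
  have "(\<Sum>j<Suc N. sc (b j) (v j)) = sc (complex_of_real r) (v N)"
    unfolding b_def by (simp add: if_distrib[of "\<lambda>c. sc c _"] sum.delta' cong: if_cong)
  moreover have "hnorm2 ip (sc (complex_of_real r) (v N)) = r\<^sup>2"
    using r by (simp add: hnorm2_sc)
  ultimately show ?thesis
    using that[of "Suc N" b] True e by (simp add: b_def)
next
  case False
  define Y where "Y = hnorm2 ip y"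
  have Y: "Y > 0" using False hnorm2_nonneg[of y] hnorm2_eq_0_iff[of y] unfolding Y_def by simp
  define \<eta> where "\<eta> = min (sqrt Y / 2) (e / (2 * r + 1))"
  obtain n where n: "n \<ge> N" and close: "\<bar>sqrt (hnorm2 ip (proj n y)) - sqrt Y\<bar> < \<eta>"
    using sqrt_hnorm2_proj_close[of \<eta> N y] Y e r unfolding \<eta>_def Y_def by auto
  define s where "s = sqrt (hnorm2 ip (proj n y))"
  have s: "s > 0" using close unfolding \<eta>_def s_def by linarith
  have s2: "hnorm2 ip (proj n y) = s\<^sup>2" unfolding s_def using hnorm2_nonneg by simp
  define t where "t = \<sigma> * r / s"
  have t: "t\<^sup>2 * s\<^sup>2 = r\<^sup>2" "t * s\<^sup>2 = \<sigma> * r * s"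
    using s \<sigma> unfolding t_def by (simp_all add: power_divide power_mult_distrib power2_eq_square)
  define b where "b j = (if j < N then 0 else complex_of_real t * ip y (v j))" for j
  have "b j = complex_of_real t * ip y (v j)" for j
    using y unfolding b_def by simp
  hence z: "(\<Sum>j<n. sc (b j) (v j)) = sc (complex_of_real t) (proj n y)"
    unfolding proj_def by (simp add: sc_sum_right sc_assoc)
  have "hnorm2 ip (y + (\<Sum>j<n. sc (b j) (v j))) - (Y + r\<^sup>2 + 2 * \<sigma> * r * sqrt Y)
      = 2 * \<sigma> * r * (s - sqrt Y)"
    unfolding z hnorm2_add_sc_proj s2 Y_def[symmetric] using t by (simp add: algebra_simps)
  moreover have "\<bar>\<sigma>\<bar> = 1" using \<sigma> by (auto simp: power2_eq_1_iff)
  moreover have "2 * r * \<bar>s - sqrt Y\<bar> \<le> e"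
  proof -
    have "2 * r * \<bar>s - sqrt Y\<bar> \<le> (2 * r + 1) * (e / (2 * r + 1))"
      using close r e Y unfolding \<eta>_def s_def by (intro mult_mono) auto
    thus ?thesis using r by simp
  qed
  ultimately show ?thesis
    using that[of n b] n r t(1) unfolding z hnorm2_sc s2 Y_def by (simp add: b_def abs_mult)
qed

lemma sums_coeffs_replaced:
  assumes "\<And>j. j \<ge> N \<Longrightarrow> u j = v j"
  shows "(\<lambda>j. (cmod (ip f (u j)))\<^sup>2) sums ((\<Sum>j<N. (cmod (ip f (u j)))\<^sup>2) + hnorm2 ip (f - proj N f))"
proof -
  have "(cmod (ip f (u j)))\<^sup>2
      = (cmod (ip (f - proj N f) (v j)))\<^sup>2 + (if j \<in> {..<N} then (cmod (ip f (u j)))\<^sup>2 else 0)" for j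
    using assms[of j] by (auto simp: ip_residual_onb)
  moreover have "(\<lambda>j. (cmod (ip (f - proj N f) (v j)))\<^sup>2 + (if j \<in> {..<N} then (cmod (ip f (u j)))\<^sup>2 else 0))
      sums (hnorm2 ip (f - proj N f) + (\<Sum>j<N. (cmod (ip f (u j)))\<^sup>2))"
    by (intro sums_add parseval sums_If_finite_set) simp
  ultimately show ?thesis by (simp add: add.commute)
qed

lemma analysis_upper_bound:
  assumes "\<And>j. hnorm2 ip (x j) \<le> 1"
  shows "(\<Sum>j<N. (cmod (ip f (x j)))\<^sup>2) + hnorm2 ip (f - proj N f) \<le> (real N + 1) * hnorm2 ip f"
proof -
  have "(\<Sum>j<N. (cmod (ip f (x j)))\<^sup>2) \<le> (\<Sum>j<N. hnorm2 ip f)"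
    by (intro sum_mono cmod_ip_power2_le assms)
  thus ?thesis using hnorm2_residual_le[of f N] by (simp add: algebra_simps)
qed

lemma onb_in_fspan: "k < n \<Longrightarrow> v k \<in> fspan sc n v"
  using proj_in_fspan[of n "v k"] by (simp add: proj_onb)

text \<open>If \<open>u\<^sub>0, \<dots>, u\<^bsub>M-1\<^esub>\<close> span the first \<open>N\<close> basis vectors, the coefficients of \<open>f\<close> along
  the \<open>u\<^sub>j\<close> control its projection: write each \<open>v\<^sub>k\<close> in terms of the \<open>u\<^sub>j\<close> and apply
  Cauchy-Schwarz.\<close>

lemma hnorm2_proj_le_coeffs:
  assumes span: "fspan sc N v \<subseteq> fspan sc M u"
  obtains E where "E \<ge> 0" "\<And>f. hnorm2 ip (proj N f) \<le> E * (\<Sum>j<M. (cmod (ip f (u j)))\<^sup>2)"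
proof -
  have "\<forall>k. \<exists>c. k < N \<longrightarrow> v k = (\<Sum>j<M. sc (c j) (u j))"
    using onb_in_fspan span unfolding fspan_def lsum_def by blast
  then obtain e where e: "\<And>k. k < N \<Longrightarrow> v k = (\<Sum>j<M. sc (e k j) (u j))"
    by metis
  define E where "E = (\<Sum>k<N. \<Sum>j<M. (cmod (e k j))\<^sup>2)"
  show ?thesis
  proof (rule that)
    show "E \<ge> 0" unfolding E_def by (intro sum_nonneg) auto
    fix f
    define T where "T = (\<Sum>j<M. (cmod (ip f (u j)))\<^sup>2)"
    have "(cmod (ip f (v k)))\<^sup>2 \<le> (\<Sum>j<M. (cmod (e k j))\<^sup>2) * T" if k: "k < N" for k
    proof -
      have "ip f (v k) = (\<Sum>j<M. cnj (e k j) * ip f (u j))"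
        by (subst e[OF k]) (simp add: ip_sum_right ip_sc_right)
      thus ?thesis
        using cmod_sum_mult_power2_le[of "\<lambda>j. cnj (e k j)" "\<lambda>j. ip f (u j)" "{..<M}"]
        unfolding T_def by simp
    qed
    hence "(\<Sum>k<N. (cmod (ip f (v k)))\<^sup>2) \<le> (\<Sum>k<N. (\<Sum>j<M. (cmod (e k j))\<^sup>2) * T)"
      by (intro sum_mono) auto
    thus "hnorm2 ip (proj N f) \<le> E * T"
      unfolding hnorm2_proj E_def sum_distrib_right .
  qed
qed

end

section \<open>Hermitian forms on coefficient vectors\<close>

lemma qform_cong: "(\<And>i. i < N \<Longrightarrow> c i = d i) \<Longrightarrow> qform N U c = qform N U d"
  unfolding qform_def by (intro arg_cong[where f=Re] sum.cong refl) auto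

lemma vnorm2_cong: "(\<And>i. i < N \<Longrightarrow> c i = d i) \<Longrightarrow> vnorm2 N c = vnorm2 N d"
  unfolding vnorm2_def by (intro sum.cong refl) auto

lemma vnorm2_nonneg: "0 \<le> vnorm2 N c"
  unfolding vnorm2_def by (intro sum_nonneg) auto

lemma vnorm2_zero [simp]: "vnorm2 N (\<lambda>_. 0) = 0"
  by (simp add: vnorm2_def)

lemma vnorm2_scale: "vnorm2 N (\<lambda>j. complex_of_real t * c j) = t\<^sup>2 * vnorm2 N c"
  unfolding vnorm2_def by (simp add: norm_mult power_mult_distrib sum_distrib_left)

lemma qform_scale: "qform N U (\<lambda>j. complex_of_real t * c j) = t\<^sup>2 * qform N U c"
proof -
  have "qform N U (\<lambda>j. complex_of_real t * c j)
      = Re (complex_of_real (t\<^sup>2) * (\<Sum>i<N. (\<Sum>j<N. U i j * c j) * cnj (c i)))"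
    unfolding qform_def
    by (intro arg_cong[where f=Re]) (simp add: sum_distrib_left algebra_simps power2_eq_square)
  thus ?thesis unfolding qform_def by simp
qed

lemma qform_uminus: "qform N (\<lambda>i j. - U i j) c = - qform N U c"
  unfolding qform_def by (simp add: sum_negf)

lemma vnorm2_eq_0_iff: "vnorm2 N c = 0 \<longleftrightarrow> (\<forall>i<N. c i = 0)"
  unfolding vnorm2_def by (subst sum_nonneg_eq_0_iff) auto

lemma vnorm2_pos: "i < N \<Longrightarrow> c i \<noteq> 0 \<Longrightarrow> 0 < vnorm2 N c"
  using vnorm2_eq_0_iff[of N c] vnorm2_nonneg[of N c] by fastforce

lemma qform_eq_0: "(\<And>i. i < N \<Longrightarrow> c i = 0) \<Longrightarrow> qform N U c = 0"
  unfolding qform_def by simp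

lemma qform_eigenvector:
  assumes "\<And>i. i < N \<Longrightarrow> (\<Sum>j<N. U i j * c j) = complex_of_real r * c i"
  shows "qform N U c = r * vnorm2 N c"
proof -
  have "qform N U c = Re (\<Sum>i<N. complex_of_real r * c i * cnj (c i))"
    unfolding qform_def using assms by (intro arg_cong[where f=Re] sum.cong) auto
  also have "\<dots> = r * vnorm2 N c"
    unfolding vnorm2_def by (simp only: Re_sum Re_of_real_mult_cnj sum_distrib_left)
  finally show ?thesis .
qed

definition unit_vec :: "nat \<Rightarrow> nat \<Rightarrow> complex" where
  "unit_vec k = (\<lambda>i. if i = k then 1 else 0)"

lemma vnorm2_unit_vec: "k < N \<Longrightarrow> vnorm2 N (unit_vec k) = 1"
  unfolding vnorm2_def unit_vec_def by (simp add: if_distrib[of "\<lambda>z. (cmod z)\<^sup>2"] cong: if_cong)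

lemma homogeneous_le_on_unit_sphere:
  assumes "\<And>c. vnorm2 N c = 1 \<Longrightarrow> f c \<le> L"
    and "\<And>c t. f (\<lambda>j. complex_of_real t * c j) = t\<^sup>2 * f c"
    and "\<And>c. vnorm2 N c = 0 \<Longrightarrow> f c = 0"
  shows "f c \<le> L * vnorm2 N c"
proof (cases "vnorm2 N c = 0")
  case True
  thus ?thesis using assms(3) by simp
next
  case False
  hence pos: "vnorm2 N c > 0" using vnorm2_nonneg[of N c] by simp
  define t where "t = 1 / sqrt (vnorm2 N c)"
  have t2: "t\<^sup>2 = 1 / vnorm2 N c"
    unfolding t_def using pos by (simp add: power_divide)
  have "vnorm2 N (\<lambda>j. complex_of_real t * c j) = 1"
    using pos by (simp add: vnorm2_scale t2)
  hence "t\<^sup>2 * f c \<le> L" using assms(1,2) by metis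
  thus ?thesis using pos by (simp add: t2 field_simps)
qed

definition trunc :: "nat \<Rightarrow> (nat \<Rightarrow> complex) \<Rightarrow> nat \<Rightarrow> complex" where
  "trunc N c = (\<lambda>j. if j < N then c j else 0)"

definition coeff_cube :: "nat \<Rightarrow> (nat \<Rightarrow> complex) set" where
  "coeff_cube N = PiE UNIV (\<lambda>j. if j < N then cball 0 1 else {0})"

lemma compact_coeff_cube: "compact (coeff_cube N)"
  unfolding coeff_cube_def
  using compactin_PiE[of "\<lambda>_. euclidean" UNIV "\<lambda>j::nat. if j < N then cball (0::complex) 1 else {0}"]
  by (simp add: euclidean_product_topology)

lemma continuous_on_coord [continuous_intros]: "continuous_on S (\<lambda>c::nat \<Rightarrow> complex. c j)"
  by (rule continuous_on_subset[OF continuous_on_product_coordinates]) simp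

lemma continuous_on_vnorm2 [continuous_intros]: "continuous_on S (vnorm2 N)"
  unfolding vnorm2_def by (intro continuous_intros)

lemma continuous_on_qform [continuous_intros]: "continuous_on S (qform N U)"
  unfolding qform_def by (intro continuous_intros)

lemma vnorm2_trunc [simp]: "vnorm2 N (trunc N c) = vnorm2 N c"
  unfolding vnorm2_def trunc_def by simp

lemma qform_trunc [simp]: "qform N U (trunc N c) = qform N U c"
  unfolding qform_def trunc_def by simp

lemma trunc_in_coeff_cube: "vnorm2 N c \<le> 1 \<Longrightarrow> trunc N c \<in> coeff_cube N"
proof -
  assume c: "vnorm2 N c \<le> 1"
  have "cmod (c j) \<le> 1" if "j < N" for j
  proof -
    have "(cmod (c j))\<^sup>2 \<le> vnorm2 N c"
      unfolding vnorm2_def using that by (intro member_le_sum) auto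
    hence "(cmod (c j))\<^sup>2 \<le> 1\<^sup>2" using c by simp
    thus ?thesis by (rule power2_le_imp_le) simp
  qed
  thus ?thesis unfolding coeff_cube_def trunc_def by (auto simp: PiE_def Pi_def)
qed

text \<open>The sets \<open>{c. vnorm2 N c \<in> T}\<close> are not compact, as the coordinates from \<open>N\<close> on are
  unconstrained; invariance under \<open>trunc N\<close> reduces the problem to their part in
  \<open>coeff_cube N\<close>.\<close>

lemma continuous_attains_max_vnorm2:
  fixes f :: "(nat \<Rightarrow> complex) \<Rightarrow> real"
  assumes f: "continuous_on UNIV f" "\<And>c. f (trunc N c) = f c"
    and T: "closed T" "T \<subseteq> {..1}" "vnorm2 N c0 \<in> T"
  obtains d where "vnorm2 N d \<in> T" "\<And>c. vnorm2 N c \<in> T \<Longrightarrow> f c \<le> f d"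
proof -
  let ?S = "coeff_cube N \<inter> (vnorm2 N -` T \<inter> UNIV)"
  have "compact ?S"
    using T(1) continuous_on_closed_vimage[of UNIV "vnorm2 N"]
    by (intro compact_Int_closed compact_coeff_cube) (auto intro: continuous_intros)
  moreover have "trunc N c0 \<in> ?S" using T by (auto intro: trunc_in_coeff_cube)
  moreover have "continuous_on ?S f" using f(1) continuous_on_subset by blast
  ultimately obtain d where d: "d \<in> ?S" "\<forall>y\<in>?S. f y \<le> f d"
    using continuous_attains_sup[of ?S f] by blast
  show ?thesis
  proof
    show "vnorm2 N d \<in> T" using d by auto
    fix c assume "vnorm2 N c \<in> T"
    hence "trunc N c \<in> ?S" using T(2) by (auto intro: trunc_in_coeff_cube)
    thus "f c \<le> f d" using d f(2) by metis
  qed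
qed

lemma continuous_attains_min_vnorm2:
  fixes f :: "(nat \<Rightarrow> complex) \<Rightarrow> real"
  assumes "continuous_on UNIV f" "\<And>c. f (trunc N c) = f c"
    and "closed T" "T \<subseteq> {..1}" "vnorm2 N c0 \<in> T"
  obtains d where "vnorm2 N d \<in> T" "\<And>c. vnorm2 N c \<in> T \<Longrightarrow> f d \<le> f c"
  using continuous_attains_max_vnorm2[of "\<lambda>c. - f c" N T c0] assms
  by (auto intro: continuous_intros)

subsection \<open>Extreme eigenvalues of Hermitian matrices\<close>

definition sesq :: "nat \<Rightarrow> (nat \<Rightarrow> nat \<Rightarrow> complex) \<Rightarrow> (nat \<Rightarrow> complex) \<Rightarrow> (nat \<Rightarrow> complex) \<Rightarrow> complex" where
  "sesq N M x y = (\<Sum>i<N. \<Sum>j<N. M i j * x j * cnj (y i))"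

definition hermitian :: "nat \<Rightarrow> (nat \<Rightarrow> nat \<Rightarrow> complex) \<Rightarrow> bool" where
  "hermitian N U \<longleftrightarrow> (\<forall>i<N. \<forall>j<N. U i j = cnj (U j i))"

lemma sesq_add_left: "sesq N M (\<lambda>j. x j + y j) z = sesq N M x z + sesq N M y z"
  unfolding sesq_def by (simp only: distrib_left distrib_right sum.distrib)

lemma sesq_add_right: "sesq N M z (\<lambda>j. x j + y j) = sesq N M z x + sesq N M z y"
  unfolding sesq_def by (simp only: complex_cnj_add distrib_left distrib_right sum.distrib)

lemma sesq_scale_left: "sesq N M (\<lambda>j. a * x j) z = a * sesq N M x z"
  unfolding sesq_def by (simp add: sum_distrib_left mult_ac)

lemma sesq_scale_right: "sesq N M z (\<lambda>j. a * x j) = cnj a * sesq N M z x"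
  unfolding sesq_def by (simp add: sum_distrib_left mult_ac)

lemma sesq_hermitian: "hermitian N M \<Longrightarrow> sesq N M x y = cnj (sesq N M y x)"
proof -
  assume H: "hermitian N M"
  have "cnj (sesq N M y x) = (\<Sum>i<N. \<Sum>j<N. cnj (M i j) * cnj (y j) * x i)"
    unfolding sesq_def by (simp only: cnj_sum complex_cnj_mult complex_cnj_cnj)
  also have "\<dots> = (\<Sum>i<N. \<Sum>j<N. M j i * cnj (y j) * x i)"
    using H unfolding hermitian_def by (intro sum.cong refl) (metis complex_cnj_cnj lessThan_iff)
  also have "\<dots> = sesq N M x y"
    unfolding sesq_def by (subst sum.swap) (simp only: mult_ac)
  finally show ?thesis by simp
qed

lemma Re_sesq_line:
  assumes "hermitian N M"
  shows "Re (sesq N M (\<lambda>j. c j + complex_of_real t * g j) (\<lambda>j. c j + complex_of_real t * g j))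
    = Re (sesq N M c c) + 2 * t * Re (sesq N M c g) + t\<^sup>2 * Re (sesq N M g g)"
proof -
  have "sesq N M (\<lambda>j. c j + complex_of_real t * g j) (\<lambda>j. c j + complex_of_real t * g j)
     = sesq N M c c + complex_of_real t * sesq N M c g + complex_of_real t * sesq N M g c
       + complex_of_real t * complex_of_real t * sesq N M g g"
    by (simp only: sesq_add_left sesq_scale_left sesq_add_right sesq_scale_right
        complex_cnj_complex_of_real distrib_left add.assoc mult.assoc)
  moreover have "Re (sesq N M g c) = Re (sesq N M c g)"
    using sesq_hermitian[OF assms, of g c] by simp
  ultimately show ?thesis by (simp add: power2_eq_square)
qed

text \<open>A positive semidefinite Hermitian form vanishes at \<open>c\<close> only if \<open>M c = 0\<close>: otherwise
  moving from \<open>c\<close> a little in the direction \<open>- M c\<close> makes the form negative.\<close>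

lemma hermitian_psd_kernel:
  assumes H: "hermitian N M" and psd: "\<And>x. 0 \<le> Re (sesq N M x x)"
    and c: "Re (sesq N M c c) = 0" and i: "i < N"
  shows "(\<Sum>j<N. M i j * c j) = 0"
proof -
  define g where "g i = (\<Sum>j<N. M i j * c j)" for i
  define G where "G = (\<Sum>i<N. (cmod (g i))\<^sup>2)"
  have G: "G \<ge> 0" unfolding G_def by (intro sum_nonneg) auto
  have "sesq N M c g = (\<Sum>i<N. g i * cnj (g i))"
    unfolding sesq_def g_def by (simp add: sum_distrib_right)
  hence cg: "Re (sesq N M c g) = G"
    unfolding G_def by (simp only: Re_sum Re_mult_cnj)
  have "G = 0"
  proof (rule ccontr)
    assume "G \<noteq> 0"
    hence Gpos: "G > 0" using G by simp
    define a where "a = \<bar>Re (sesq N M g g)\<bar> + 1"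
    have a: "a > 0" "Re (sesq N M g g) < a" unfolding a_def by auto
    define s where "s = G / a"
    have s: "s > 0" unfolding s_def using Gpos a by simp
    have "0 \<le> 2 * (- s) * G + s\<^sup>2 * Re (sesq N M g g)"
      using psd[of "\<lambda>j. c j + complex_of_real (- s) * g j"] unfolding Re_sesq_line[OF H] c cg by simp
    hence "2 * G \<le> s * Re (sesq N M g g)"
      using s by (simp add: power2_eq_square algebra_simps)
    also have "s * Re (sesq N M g g) = G * (Re (sesq N M g g) / a)" unfolding s_def by simp
    also have "\<dots> < G * 1"
      using Gpos a by (intro mult_strict_left_mono) (auto simp: divide_less_eq)
    finally show False using Gpos by simp
  qed
  thus ?thesis
    using i unfolding G_def g_def by (subst (asm) sum_nonneg_eq_0_iff) auto
qed

definition shift_diag :: "real \<Rightarrow> (nat \<Rightarrow> nat \<Rightarrow> complex) \<Rightarrow> nat \<Rightarrow> nat \<Rightarrow> complex" where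
  "shift_diag L U i j = U i j - (if i = j then complex_of_real L else 0)"

lemma hermitian_shift_diag:
  assumes "hermitian N U"
  shows "hermitian N (shift_diag L U)"
  unfolding hermitian_def
proof (intro allI impI)
  fix i j assume "i < N" "j < N"
  hence "U i j = cnj (U j i)" using assms unfolding hermitian_def by blast
  hence "shift_diag L U i j = cnj (U j i) - (if i = j then complex_of_real L else 0)"
    unfolding shift_diag_def by (simp only:)
  also have "\<dots> = cnj (shift_diag L U j i)"
    unfolding shift_diag_def by auto
  finally show "shift_diag L U i j = cnj (shift_diag L U j i)" .
qed

lemma shift_diag_mult:
  "i < N \<Longrightarrow> (\<Sum>j<N. shift_diag L U i j * x j) = (\<Sum>j<N. U i j * x j) - complex_of_real L * x i"
proof -
  assume i: "i < N"
  have "shift_diag L U i j * x j = U i j * x j - (if j = i then complex_of_real L * x i else 0)" for j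
    by (simp add: shift_diag_def left_diff_distrib)
  thus ?thesis using i by (simp add: sum_subtractf sum.delta)
qed

lemma Re_sesq_shift_diag: "Re (sesq N (shift_diag L U) x x) = qform N U x - L * vnorm2 N x"
proof -
  have "sesq N (shift_diag L U) x x
      = (\<Sum>i<N. ((\<Sum>j<N. U i j * x j) - complex_of_real L * x i) * cnj (x i))"
    unfolding sesq_def sum_distrib_right[symmetric] by (intro sum.cong refl) (simp add: shift_diag_mult)
  also have "\<dots> = (\<Sum>i<N. (\<Sum>j<N. U i j * x j) * cnj (x i))
      - (\<Sum>i<N. complex_of_real L * x i * cnj (x i))"
    by (simp add: left_diff_distrib sum_subtractf)
  finally have "sesq N (shift_diag L U) x x = \<dots>" .
  moreover have "Re (\<Sum>i<N. complex_of_real L * x i * cnj (x i)) = L * vnorm2 N x"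
    unfolding vnorm2_def by (simp only: Re_sum Re_of_real_mult_cnj sum_distrib_left)
  ultimately show ?thesis unfolding qform_def by simp
qed

lemma rayleigh_min_eigenvector:
  assumes H: "hermitian N U" and ge: "\<And>d. L * vnorm2 N d \<le> qform N U d"
    and eq: "qform N U c = L * vnorm2 N c" and i: "i < N"
  shows "(\<Sum>j<N. U i j * c j) = complex_of_real L * c i"
proof -
  have "(\<Sum>j<N. shift_diag L U i j * c j) = 0"
  proof (rule hermitian_psd_kernel[OF hermitian_shift_diag[OF H] _ _ i])
    show "0 \<le> Re (sesq N (shift_diag L U) x x)" for x
      using ge[of x] unfolding Re_sesq_shift_diag by simp
    show "Re (sesq N (shift_diag L U) c c) = 0"
      using eq unfolding Re_sesq_shift_diag by simp
  qed
  thus ?thesis using shift_diag_mult[OF i] by simp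
qed

lemma rayleigh_max_eigenvector:
  assumes H: "hermitian N U" and le: "\<And>d. qform N U d \<le> L * vnorm2 N d"
    and eq: "qform N U c = L * vnorm2 N c" and i: "i < N"
  shows "(\<Sum>j<N. U i j * c j) = complex_of_real L * c i"
proof -
  have "hermitian N (\<lambda>i j. - U i j)"
    using H unfolding hermitian_def by (metis complex_cnj_minus)
  hence "(\<Sum>j<N. - U i j * c j) = complex_of_real (- L) * c i"
  proof (rule rayleigh_min_eigenvector[OF _ _ _ i])
    show "- L * vnorm2 N d \<le> qform N (\<lambda>i j. - U i j) d" for d
      using le[of d] by (simp add: qform_uminus)
    show "qform N (\<lambda>i j. - U i j) c = - L * vnorm2 N c"
      using eq by (simp add: qform_uminus)
  qed
  thus ?thesis by (simp add: sum_negf)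
qed

lemma finite_real_eigenvalues: "finite {r. mat_eigenvalue N U (complex_of_real r)}"
proof -
  define A where "A = Matrix.mat N N (\<lambda>(i,j). U i j)"
  have A: "A \<in> carrier_mat N N" unfolding A_def by auto
  have "{r. mat_eigenvalue N U (complex_of_real r)} \<subseteq> Re ` {x. poly (char_poly A) x = 0}"
  proof
    fix r assume "r \<in> {r. mat_eigenvalue N U (complex_of_real r)}"
    then obtain c where c: "\<exists>i<N. c i \<noteq> 0" "\<forall>i<N. (\<Sum>j<N. U i j * c j) = complex_of_real r * c i"
      unfolding mat_eigenvalue_def by auto
    define x where "x = Matrix.vec N c"
    have "eigenvector A x (complex_of_real r)"
      unfolding eigenvector_def
    proof (intro conjI)
      show "x \<in> carrier_vec (dim_row A)" using A x_def by auto
      show "x \<noteq> 0\<^sub>v (dim_row A)" using c(1) A unfolding x_def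
        by (metis carrier_matD(1) index_vec index_zero_vec(1))
      show "A *\<^sub>v x = complex_of_real r \<cdot>\<^sub>v x"
        by (rule eq_vecI, insert c(2), auto simp: A_def x_def mult_mat_vec_def scalar_prod_def
           sum.atLeast0_lessThan_Suc lessThan_atLeast0[symmetric])
    qed
    hence "poly (char_poly A) (complex_of_real r) = 0"
      using eigenvalue_root_char_poly[OF A] eigenvalue_def by blast
    thus "r \<in> Re ` {x. poly (char_poly A) x = 0}" by force
  qed
  moreover have "char_poly A \<noteq> 0" using degree_monic_char_poly[OF A] by auto
  ultimately show ?thesis using poly_roots_finite finite_subset by blast
qed

lemma eigenvalue_qform:
  assumes "mat_eigenvalue N U (complex_of_real r)"
  obtains c where "vnorm2 N c > 0" "qform N U c = r * vnorm2 N c"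
proof -
  obtain c i where "i < N" "c i \<noteq> 0"
    and "\<And>i. i < N \<Longrightarrow> (\<Sum>j<N. U i j * c j) = complex_of_real r * c i"
    using assms unfolding mat_eigenvalue_def by blast
  thus ?thesis using that[of c] vnorm2_pos[of i N c] qform_eigenvector[of N U c r] by blast
qed

lemma mat_eigenvalueI:
  assumes "vnorm2 N c \<noteq> 0" "\<And>i. i < N \<Longrightarrow> (\<Sum>j<N. U i j * c j) = complex_of_real r * c i"
  shows "mat_eigenvalue N U (complex_of_real r)"
  using assms vnorm2_eq_0_iff[of N c] unfolding mat_eigenvalue_def by blast

lemma hermitian_max_eig:
  assumes H: "hermitian N U" and N: "N \<ge> 1"
  shows "qform N U c \<le> max_eig N U * vnorm2 N c"
    and "\<exists>d. vnorm2 N d = 1 \<and> qform N U d = max_eig N U"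
proof -
  obtain d where d: "vnorm2 N d \<in> {1}" "\<And>c. vnorm2 N c \<in> {1} \<Longrightarrow> qform N U c \<le> qform N U d"
    by (rule continuous_attains_max_vnorm2[of "qform N U" N "{1}" "unit_vec 0"])
      (use N in \<open>simp_all add: continuous_on_qform vnorm2_unit_vec\<close>)
  have le: "qform N U c \<le> qform N U d * vnorm2 N c" for c
    using d(2) by (intro homogeneous_le_on_unit_sphere) (simp_all add: qform_scale vnorm2_eq_0_iff qform_eq_0)
  have "mat_eigenvalue N U (complex_of_real (qform N U d))"
    using d(1) by (intro mat_eigenvalueI[of N d] rayleigh_max_eigenvector[OF H le]) simp_all
  moreover have "r \<le> qform N U d" if ev: "mat_eigenvalue N U (complex_of_real r)" for r
  proof -
    obtain c where "vnorm2 N c > 0" "qform N U c = r * vnorm2 N c"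
      using eigenvalue_qform[OF ev] .
    thus ?thesis using le[of c] by simp
  qed
  ultimately have "max_eig N U = qform N U d"
    unfolding max_eig_def by (intro Max_eqI finite_real_eigenvalues) auto
  thus "qform N U c \<le> max_eig N U * vnorm2 N c" "\<exists>d. vnorm2 N d = 1 \<and> qform N U d = max_eig N U"
    using le d(1) by auto
qed

lemma hermitian_min_eig:
  assumes H: "hermitian N U" and N: "N \<ge> 1"
  shows "min_eig N U * vnorm2 N c \<le> qform N U c"
    and "\<exists>d. vnorm2 N d = 1 \<and> qform N U d = min_eig N U"
proof -
  obtain d where d: "vnorm2 N d \<in> {1}" "\<And>c. vnorm2 N c \<in> {1} \<Longrightarrow> qform N U d \<le> qform N U c"
    by (rule continuous_attains_min_vnorm2[of "qform N U" N "{1}" "unit_vec 0"])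
      (use N in \<open>simp_all add: continuous_on_qform vnorm2_unit_vec\<close>)
  have "- qform N U c \<le> - qform N U d * vnorm2 N c" for c
    using d(2) by (intro homogeneous_le_on_unit_sphere[where f="\<lambda>c. - qform N U c"])
      (simp_all add: qform_scale vnorm2_eq_0_iff qform_eq_0)
  hence ge: "qform N U d * vnorm2 N c \<le> qform N U c" for c
    by simp
  have "mat_eigenvalue N U (complex_of_real (qform N U d))"
    using d(1) by (intro mat_eigenvalueI[of N d] rayleigh_min_eigenvector[OF H ge]) simp_all
  moreover have "qform N U d \<le> r" if ev: "mat_eigenvalue N U (complex_of_real r)" for r
  proof -
    obtain c where "vnorm2 N c > 0" "qform N U c = r * vnorm2 N c"
      using eigenvalue_qform[OF ev] .
    thus ?thesis using ge[of c] by simp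
  qed
  ultimately have "min_eig N U = qform N U d"
    unfolding min_eig_def by (intro Min_eqI finite_real_eigenvalues) auto
  thus "min_eig N U * vnorm2 N c \<le> qform N U c" "\<exists>d. vnorm2 N d = 1 \<and> qform N U d = min_eig N U"
    using ge d(1) by auto
qed

context complex_hilbert
begin

lemma qform_gram: "qform N (gram ip x) c = hnorm2 ip (\<Sum>i<N. sc (cnj (c i)) (x i))"
proof -
  have "ip (\<Sum>i<N. sc (cnj (c i)) (x i)) (\<Sum>i<N. sc (cnj (c i)) (x i))
      = (\<Sum>i<N. (\<Sum>j<N. ip (x i) (x j) * c j) * cnj (c i))"
    by (simp add: ip_sum_left ip_sum_right ip_sc_left ip_sc_right sum_distrib_left
        sum_distrib_right mult_ac) (rule sum.swap)
  thus ?thesis unfolding qform_def hnorm2_def gram_def by simp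
qed

lemma qform_gram_nonneg: "0 \<le> qform N (gram ip x) c"
  by (simp add: qform_gram hnorm2_nonneg)

lemma hermitian_gram: "hermitian N (gram ip x)"
  unfolding hermitian_def gram_def using ip_conj by blast

end

section \<open>Riesz bases and their optimal constants\<close>

lemma cSup_eq_approx:
  fixes S :: "real set"
  assumes "\<And>x. x \<in> S \<Longrightarrow> x \<le> M" and "\<And>e. e > 0 \<Longrightarrow> \<exists>x\<in>S. M - e \<le> x"
  shows "Sup S = M"
proof (rule cSup_eq_non_empty)
  show "S \<noteq> {}" using assms(2)[of 1] by auto
  show "x \<le> M" if "x \<in> S" for x using assms(1) that .
  show "M \<le> y" if y: "\<And>x. x \<in> S \<Longrightarrow> x \<le> y" for y
  proof (rule ccontr)
    assume "\<not> M \<le> y"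
    then obtain x where x: "x \<in> S" "M - (M - y) / 2 \<le> x"
      using assms(2)[of "(M - y) / 2"] by auto
    show False using y[OF x(1)] x(2) \<open>\<not> M \<le> y\<close> by (simp add: field_simps)
  qed
qed

lemma cInf_eq_approx:
  fixes S :: "real set"
  assumes "\<And>x. x \<in> S \<Longrightarrow> M \<le> x" and "\<And>e. e > 0 \<Longrightarrow> \<exists>x\<in>S. x \<le> M + e"
  shows "Inf S = M"
proof (rule cInf_eq_non_empty)
  show "S \<noteq> {}" using assms(2)[of 1] by auto
  show "M \<le> x" if "x \<in> S" for x using assms(1) that .
  show "y \<le> M" if y: "\<And>x. x \<in> S \<Longrightarrow> y \<le> x" for y
  proof (rule ccontr)
    assume "\<not> y \<le> M"
    then obtain x where x: "x \<in> S" "x \<le> M + (y - M) / 2"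
      using assms(2)[of "(y - M) / 2"] by auto
    show False using y[OF x(1)] x(2) \<open>\<not> y \<le> M\<close> by (simp add: field_simps)
  qed
qed

context complex_hilbert
begin

lemma lsum_scale: "lsum sc n (\<lambda>j. t * a j) u = sc t (lsum sc n a u)"
  unfolding lsum_def by (simp add: sc_sum_right sc_assoc)

lemma riesz_values_memI:
  "(\<Sum>j<n. (cmod (a j))\<^sup>2) = 1 \<Longrightarrow> hnorm2 ip (lsum sc n a u) \<in> riesz_values sc ip u"
  unfolding riesz_values_def hnorm_power2 by blast

lemma riesz_valuesE:
  assumes "x \<in> riesz_values sc ip u"
  obtains n a where "(\<Sum>j<n. (cmod (a j))\<^sup>2) = 1" "x = hnorm2 ip (lsum sc n a u)"
  using assms unfolding riesz_values_def hnorm_power2 by blast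

lemma synthesis_bounds_of_unit:
  assumes "\<And>n a. (\<Sum>j<n. (cmod (a j))\<^sup>2) = 1 \<Longrightarrow>
      lo \<le> hnorm2 ip (lsum sc n a u) \<and> hnorm2 ip (lsum sc n a u) \<le> hi"
  shows "lo * (\<Sum>j<n. (cmod (a j))\<^sup>2) \<le> hnorm2 ip (lsum sc n a u)"
    and "hnorm2 ip (lsum sc n a u) \<le> hi * (\<Sum>j<n. (cmod (a j))\<^sup>2)"
proof -
  define S where "S = (\<Sum>j<n. (cmod (a j))\<^sup>2)"
  have "lo * S \<le> hnorm2 ip (lsum sc n a u) \<and> hnorm2 ip (lsum sc n a u) \<le> hi * S"
  proof (cases "S = 0")
    case True
    hence "a j = 0" if "j < n" for j
      using that unfolding S_def by (subst (asm) sum_nonneg_eq_0_iff) auto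
    hence "lsum sc n a u = 0" unfolding lsum_def by simp
    thus ?thesis using True by simp
  next
    case False
    hence S: "S > 0" using sum_nonneg[of "{..<n}" "\<lambda>j. (cmod (a j))\<^sup>2"] unfolding S_def by simp
    define t where "t = 1 / sqrt S"
    have t2: "t\<^sup>2 = 1 / S" unfolding t_def using S by (simp add: power_divide)
    have "(\<Sum>j<n. (cmod (complex_of_real t * a j))\<^sup>2) = t\<^sup>2 * S"
      unfolding S_def by (simp add: norm_mult power_mult_distrib sum_distrib_left)
    hence "(\<Sum>j<n. (cmod (complex_of_real t * a j))\<^sup>2) = 1" using S t2 by simp
    from assms[OF this] have "lo \<le> t\<^sup>2 * hnorm2 ip (lsum sc n a u)" "t\<^sup>2 * hnorm2 ip (lsum sc n a u) \<le> hi"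
      unfolding lsum_scale hnorm2_sc by simp_all
    thus ?thesis using S unfolding t2 by (simp add: field_simps)
  qed
  thus "lo * (\<Sum>j<n. (cmod (a j))\<^sup>2) \<le> hnorm2 ip (lsum sc n a u)"
    "hnorm2 ip (lsum sc n a u) \<le> hi * (\<Sum>j<n. (cmod (a j))\<^sup>2)"
    unfolding S_def by simp_all
qed

lemma riesz_basisI:
  assumes sums: "\<And>f. (\<lambda>j. (cmod (ip f (u j)))\<^sup>2) sums S f"
    and analysis: "\<And>f. al * hnorm2 ip f \<le> S f" "\<And>f. S f \<le> be * hnorm2 ip f" and al: "al > 0"
    and synthesis: "\<And>n a. (\<Sum>j<n. (cmod (a j))\<^sup>2) = 1 \<Longrightarrow>
      lo \<le> hnorm2 ip (lsum sc n a u) \<and> hnorm2 ip (lsum sc n a u) \<le> hi"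
    and lo: "lo > 0"
  shows "riesz_basis sc ip u"
  unfolding riesz_basis_def
proof (intro exI conjI allI)
  define A where "A = min (min al lo) 1"
  define B where "B = max (max be hi) 1"
  show "0 < A" "A \<le> B" unfolding A_def B_def using al lo by auto
  fix f
  show "summable (\<lambda>j. (cmod (ip f (u j)))\<^sup>2)" using sums[of f] by (rule sums_summable)
  have sum_eq: "(\<Sum>j. (cmod (ip f (u j)))\<^sup>2) = S f" using sums[of f] by (rule sums_unique[symmetric])
  have "A * hnorm2 ip f \<le> al * hnorm2 ip f" "be * hnorm2 ip f \<le> B * hnorm2 ip f"
    unfolding A_def B_def using hnorm2_nonneg[of f] by (auto intro!: mult_right_mono)
  thus "A * (hnorm ip f)\<^sup>2 \<le> (\<Sum>j. (cmod (ip f (u j)))\<^sup>2)"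
    "(\<Sum>j. (cmod (ip f (u j)))\<^sup>2) \<le> B * (hnorm ip f)\<^sup>2"
    unfolding sum_eq hnorm_power2 using analysis[of f] by linarith+
next
  define A where "A = min (min al lo) 1"
  define B where "B = max (max be hi) 1"
  fix n :: nat and a :: "nat \<Rightarrow> complex"
  have "0 \<le> (\<Sum>j<n. (cmod (a j))\<^sup>2)" by (intro sum_nonneg) auto
  hence "A * (\<Sum>j<n. (cmod (a j))\<^sup>2) \<le> lo * (\<Sum>j<n. (cmod (a j))\<^sup>2)"
    "hi * (\<Sum>j<n. (cmod (a j))\<^sup>2) \<le> B * (\<Sum>j<n. (cmod (a j))\<^sup>2)"
    unfolding A_def B_def by (auto intro!: mult_right_mono)
  thus "A * (\<Sum>j<n. (cmod (a j))\<^sup>2) \<le> (hnorm ip (lsum sc n a u))\<^sup>2"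
    "(hnorm ip (lsum sc n a u))\<^sup>2 \<le> B * (\<Sum>j<n. (cmod (a j))\<^sup>2)"
    unfolding hnorm_power2 using synthesis_bounds_of_unit[OF synthesis, where n=n and a=a] by linarith+
qed

end

section \<open>Replacing the first vectors of an orthonormal basis\<close>

lemma sum_lessThan_if_swap:
  fixes n N :: nat
  shows "(\<Sum>j<n. if j < N then f j else 0) = (\<Sum>j<N. if j < n then f j else (0::'b::comm_monoid_add))"
proof -
  have "(\<Sum>j<n. if j < N then f j else 0) = (\<Sum>j\<in>{j\<in>{..<n}. j < N}. f j)"
    by (rule sum.inter_filter[symmetric]) simp
  also have "{j\<in>{..<n}. j < N} = {j\<in>{..<N}. j < n}" by auto
  also have "(\<Sum>j\<in>\<dots>. f j) = (\<Sum>j<N. if j < n then f j else 0)"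
    by (rule sum.inter_filter) simp
  finally show ?thesis .
qed

locale basis_replacement = hilbert_onb sc ip v
  for sc :: "complex \<Rightarrow> 'a::ab_group_add \<Rightarrow> 'a" and ip v +
  fixes w :: "nat \<Rightarrow> 'a" and N :: nat
  assumes unit: "\<And>j. hnorm2 ip (w j) = 1" and N_pos: "N \<ge> 1"
    and basis: "is_basis_of sc N (\<lambda>j. proj N (w j)) (fspan sc N v)"
begin

definition U1 where "U1 = gram ip (\<lambda>j. proj N (w j))"
definition U2 where "U2 = gram ip (\<lambda>j. w j - proj N (w j))"
definition BB where "BB = (\<lambda>j. if j < N then w j else v j)"
definition BBt where "BBt = (\<lambda>j. if j < N then proj N (w j) else v j)"
definition F where "F c = qform N U1 c + (sqrt (1 - vnorm2 N c) + sqrt (qform N U2 c))\<^sup>2"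
definition G where "G c = qform N U1 c + (sqrt (1 - vnorm2 N c) - sqrt (qform N U2 c))\<^sup>2"

text \<open>A combination \<open>\<Sum>\<^sub>j a\<^sub>j BB\<^sub>j\<close> splits into \<open>wcomb (head n a)\<close>, built from the first \<open>N\<close>
  coefficients, and \<open>tail n a \<in> H''\<close>.  By \<open>qform_gram\<close>, \<open>qform N (gram ip x) d\<close> is the square
  norm of \<open>\<Sum>\<^sub>i cnj (d\<^sub>i) x\<^sub>i\<close>, hence the conjugations.\<close>

definition wcomb :: "(nat \<Rightarrow> complex) \<Rightarrow> 'a" where
  "wcomb d = (\<Sum>j<N. sc (cnj (d j)) (w j))"

definition head :: "nat \<Rightarrow> (nat \<Rightarrow> complex) \<Rightarrow> nat \<Rightarrow> complex" where
  "head n a = (\<lambda>j. cnj (if j < n then a j else 0))"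

definition tail :: "nat \<Rightarrow> (nat \<Rightarrow> complex) \<Rightarrow> 'a" where
  "tail n a = (\<Sum>j<n. sc (if j < N then 0 else a j) (v j))"

lemma wcomb_cong: "(\<And>j. j < N \<Longrightarrow> d j = d' j) \<Longrightarrow> wcomb d = wcomb d'"
  unfolding wcomb_def by simp

lemma wcomb_unit_vec: "j < N \<Longrightarrow> wcomb (unit_vec j) = w j"
  unfolding wcomb_def unit_vec_def by (simp add: if_distrib[of cnj] if_distrib[of "\<lambda>c. sc c _"] cong: if_cong)

lemma hnorm2_proj_wcomb: "hnorm2 ip (proj N (wcomb d)) = qform N U1 d"
  unfolding U1_def qform_gram wcomb_def by (simp add: proj_sum proj_sc)

lemma hnorm2_residual_wcomb: "hnorm2 ip (wcomb d - proj N (wcomb d)) = qform N U2 d"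
  unfolding U2_def qform_gram wcomb_def by (simp add: proj_sum proj_sc sc_diff_right sum_subtractf)

lemma proj_tail: "proj N (tail n a) = 0"
  unfolding tail_def by (simp add: proj_sum proj_sc proj_onb) (auto intro!: sum.neutral)

lemma hnorm2_tail: "hnorm2 ip (tail n a) = (\<Sum>j<n. (cmod (a j))\<^sup>2) - vnorm2 N (head n a)"
proof -
  have "(\<Sum>j<n. (cmod (a j))\<^sup>2) = (\<Sum>j<n. if j < N then (cmod (a j))\<^sup>2 else 0)
      + (\<Sum>j<n. (cmod (if j < N then 0 else a j))\<^sup>2)"
    unfolding sum.distrib[symmetric] by (intro sum.cong) auto
  moreover have "(\<Sum>j<n. if j < N then (cmod (a j))\<^sup>2 else 0) = vnorm2 N (head n a)"
    unfolding vnorm2_def head_def by (subst sum_lessThan_if_swap) (intro sum.cong, auto)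
  ultimately show ?thesis unfolding tail_def by (simp add: hnorm2_comb_onb)
qed

lemma lsum_BB: "lsum sc n a BB = wcomb (head n a) + tail n a"
proof -
  have "lsum sc n a BB = (\<Sum>j<n. if j < N then sc (a j) (w j) else 0) + tail n a"
    unfolding lsum_def BB_def tail_def sum.distrib[symmetric] by (intro sum.cong) auto
  also have "(\<Sum>j<n. if j < N then sc (a j) (w j) else 0) = wcomb (head n a)"
    unfolding wcomb_def head_def by (subst sum_lessThan_if_swap) (intro sum.cong, auto)
  finally show ?thesis .
qed

lemma lsum_BBt: "lsum sc n a BBt = proj N (wcomb (head n a)) + tail n a"
proof -
  have "lsum sc n a BBt = (\<Sum>j<n. if j < N then sc (a j) (proj N (w j)) else 0) + tail n a"
    unfolding lsum_def BBt_def tail_def sum.distrib[symmetric] by (intro sum.cong) auto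
  also have "(\<Sum>j<n. if j < N then sc (a j) (proj N (w j)) else 0) = proj N (wcomb (head n a))"
    unfolding wcomb_def head_def proj_sum proj_sc by (subst sum_lessThan_if_swap) (intro sum.cong, auto)
  finally show ?thesis .
qed

lemma hnorm2_lsum_BB:
  "hnorm2 ip (lsum sc n a BB)
    = qform N U1 (head n a) + hnorm2 ip ((wcomb (head n a) - proj N (wcomb (head n a))) + tail n a)"
  using hnorm2_proj_residual[of "lsum sc n a BB" N]
  by (simp add: lsum_BB proj_add proj_tail hnorm2_proj_wcomb diff_add_eq)

lemma hnorm2_lsum_BBt:
  "hnorm2 ip (lsum sc n a BBt) = qform N U1 (head n a) + hnorm2 ip (tail n a)"
  using hnorm2_proj_residual[of "lsum sc n a BBt" N]
  by (simp add: lsum_BBt proj_add proj_tail proj_idem hnorm2_proj_wcomb)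

lemma head_vnorm2_le:
  "(\<Sum>j<n. (cmod (a j))\<^sup>2) = 1 \<Longrightarrow> vnorm2 N (head n a) \<le> 1"
  using hnorm2_tail[of n a] hnorm2_nonneg[of "tail n a"] by simp

lemma qform_U1_pos: "i < N \<Longrightarrow> d i \<noteq> 0 \<Longrightarrow> qform N U1 d > 0"
proof (rule ccontr)
  assume i: "i < N" "d i \<noteq> 0" and "\<not> qform N U1 d > 0"
  hence "qform N U1 d = 0" using qform_gram_nonneg[of N _ d] unfolding U1_def by (metis order_less_le)
  hence "lsum sc N (\<lambda>i. cnj (d i)) (\<lambda>j. proj N (w j)) = 0"
    unfolding U1_def qform_gram hnorm2_eq_0_iff lsum_def .
  hence "cnj (d i) = 0" using basis i(1) unfolding is_basis_of_def by blast
  thus False using i(2) by simp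
qed

lemma qform_U2_nonneg: "0 \<le> qform N U2 d"
  unfolding U2_def by (rule qform_gram_nonneg)

lemma qform_U1_unit_vec: "j < N \<Longrightarrow> qform N U1 (unit_vec j) = hnorm2 ip (proj N (w j))"
  using hnorm2_proj_wcomb[of "unit_vec j"] by (simp add: wcomb_unit_vec)

lemma qform_U2_unit_vec: "j < N \<Longrightarrow> qform N U2 (unit_vec j) = hnorm2 ip (w j - proj N (w j))"
  using hnorm2_residual_wcomb[of "unit_vec j"] by (simp add: wcomb_unit_vec)

lemma max_eig_U1: "qform N U1 c \<le> max_eig N U1 * vnorm2 N c"
  "\<exists>d. vnorm2 N d = 1 \<and> qform N U1 d = max_eig N U1"
  using hermitian_max_eig[OF _ N_pos] hermitian_gram unfolding U1_def by blast+

lemma min_eig_U1: "min_eig N U1 * vnorm2 N c \<le> qform N U1 c"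
  "\<exists>d. vnorm2 N d = 1 \<and> qform N U1 d = min_eig N U1"
  using hermitian_min_eig[OF _ N_pos] hermitian_gram unfolding U1_def by blast+

lemma min_eig_U1_pos: "min_eig N U1 > 0"
proof -
  obtain d where d: "vnorm2 N d = 1" "qform N U1 d = min_eig N U1"
    using min_eig_U1(2) by blast
  then obtain i where "i < N" "d i \<noteq> 0" using vnorm2_eq_0_iff[of N d] by auto
  thus ?thesis using qform_U1_pos d(2) by metis
qed

lemma min_eig_U1_le_hnorm2_proj: "j < N \<Longrightarrow> min_eig N U1 \<le> hnorm2 ip (proj N (w j))"
  using min_eig_U1(1)[of "unit_vec j"] by (simp add: vnorm2_unit_vec qform_U1_unit_vec)

lemma min_eig_U1_le_1: "min_eig N U1 \<le> 1"
  using min_eig_U1_le_hnorm2_proj[of 0] N_pos hnorm2_proj_le[of N "w 0"] unit[of 0] by simp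

lemma BB_sums:
  "(\<lambda>j. (cmod (ip f (BB j)))\<^sup>2) sums ((\<Sum>j<N. (cmod (ip f (w j)))\<^sup>2) + hnorm2 ip (f - proj N f))"
  using sums_coeffs_replaced[of N BB f] unfolding BB_def by simp

lemma BBt_sums:
  "(\<lambda>j. (cmod (ip f (BBt j)))\<^sup>2) sums ((\<Sum>j<N. (cmod (ip f (proj N (w j))))\<^sup>2) + hnorm2 ip (f - proj N f))"
  using sums_coeffs_replaced[of N BBt f] unfolding BBt_def by simp

lemma hnorm2_proj_le_coeffs_proj_w:
  obtains E where "E \<ge> 0" "\<And>f. hnorm2 ip (proj N f) \<le> E * (\<Sum>j<N. (cmod (ip f (proj N (w j))))\<^sup>2)"
proof -
  have "fspan sc N v \<subseteq> fspan sc N (\<lambda>j. proj N (w j))"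
    using basis unfolding is_basis_of_def by simp
  thus ?thesis using that by (rule hnorm2_proj_le_coeffs)
qed

lemma BBt_analysis_lower:
  assumes E: "E \<ge> 0" "\<And>f. hnorm2 ip (proj N f) \<le> E * (\<Sum>j<N. (cmod (ip f (proj N (w j))))\<^sup>2)"
  shows "1 / (E + 1) * hnorm2 ip f \<le> (\<Sum>j<N. (cmod (ip f (proj N (w j))))\<^sup>2) + hnorm2 ip (f - proj N f)"
proof -
  define T where "T = (\<Sum>j<N. (cmod (ip f (proj N (w j))))\<^sup>2)"
  have T: "T \<ge> 0" unfolding T_def by (intro sum_nonneg) auto
  have "hnorm2 ip f \<le> E * T + hnorm2 ip (f - proj N f)"
    using hnorm2_proj_residual[of f N] E(2)[of f] unfolding T_def by linarith
  also have "\<dots> \<le> (E + 1) * (T + hnorm2 ip (f - proj N f))"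
    using T E(1) hnorm2_nonneg[of "f - proj N f"] by (simp add: algebra_simps)
  finally show ?thesis using E(1) unfolding T_def by (simp add: field_simps)
qed

text \<open>For \<open>BB\<close>, the coefficients along the \<open>p'(w\<^sub>j)\<close> are recovered from those along the
  \<open>w\<^sub>j\<close> up to \<open>\<langle>f, p''(w\<^sub>j)\<rangle> = \<langle>p''(f), p''(w\<^sub>j)\<rangle>\<close>, which is controlled by \<open>\<parallel>p''(f)\<parallel>\<close>.\<close>

lemma BB_analysis_lower:
  assumes E: "E \<ge> 0" "\<And>f. hnorm2 ip (proj N f) \<le> E * (\<Sum>j<N. (cmod (ip f (proj N (w j))))\<^sup>2)"
  defines "K \<equiv> 2 * (E + 1) * (real N + 1) + 1"
  shows "1 / K * hnorm2 ip f \<le> (\<Sum>j<N. (cmod (ip f (w j)))\<^sup>2) + hnorm2 ip (f - proj N f)"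
proof -
  define h where "h = f - proj N f"
  define T where "T = (\<Sum>j<N. (cmod (ip f (proj N (w j))))\<^sup>2)"
  define S where "S = (\<Sum>j<N. (cmod (ip f (w j)))\<^sup>2)"
  have S: "S \<ge> 0" unfolding S_def by (intro sum_nonneg) auto
  have h: "hnorm2 ip h \<ge> 0" by (rule hnorm2_nonneg)
  have "(cmod (ip f (proj N (w j))))\<^sup>2 \<le> 2 * (cmod (ip f (w j)))\<^sup>2 + 2 * hnorm2 ip h" for j
  proof -
    have "ip f (w j) = ip f (proj N (w j)) + ip h (w j - proj N (w j))"
      unfolding h_def ip_residual_residual by (simp add: ip_diff_right)
    moreover have "(cmod (ip h (w j - proj N (w j))))\<^sup>2 \<le> hnorm2 ip h"
      using hnorm2_residual_le[of "w j" N] unit[of j] by (intro cmod_ip_power2_le) simp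
    ultimately show ?thesis
      using cmod_power2_le_add[of "ip f (proj N (w j))" "ip h (w j - proj N (w j))"] by simp
  qed
  hence "T \<le> (\<Sum>j<N. 2 * (cmod (ip f (w j)))\<^sup>2 + 2 * hnorm2 ip h)"
    unfolding T_def by (intro sum_mono)
  hence T: "T \<le> 2 * S + 2 * real N * hnorm2 ip h"
    unfolding S_def by (simp add: sum.distrib sum_distrib_left)
  have "hnorm2 ip f \<le> E * T + hnorm2 ip h"
    using hnorm2_proj_residual[of f N] E(2)[of f] unfolding T_def h_def by linarith
  also have "\<dots> \<le> E * (2 * S + 2 * real N * hnorm2 ip h) + hnorm2 ip h"
    using T E(1) by (intro add_right_mono mult_left_mono) auto
  also have "\<dots> \<le> K * (S + hnorm2 ip h)"
    unfolding K_def using S h E(1) by (simp add: algebra_simps)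
  finally show ?thesis
    using E(1) unfolding K_def S_def h_def by (simp add: field_simps add_pos_nonneg)
qed

lemma BBt_value_memI:
  assumes "vnorm2 N d \<le> 1"
  shows "qform N U1 d + (1 - vnorm2 N d) \<in> riesz_values sc ip BBt"
proof -
  define a where
    "a j = (if j < N then cnj (d j) else if j = N then complex_of_real (sqrt (1 - vnorm2 N d)) else 0)"
    for j
  have head: "qform N U1 (head (Suc N) a) = qform N U1 d" "vnorm2 N (head (Suc N) a) = vnorm2 N d"
    by (auto intro!: qform_cong vnorm2_cong simp: head_def a_def)
  have "hnorm2 ip (tail (Suc N) a) = 1 - vnorm2 N d"
    unfolding tail_def using assms by (simp add: hnorm2_comb_onb hnorm2_sc a_def)
  hence "(\<Sum>j<Suc N. (cmod (a j))\<^sup>2) = 1" "hnorm2 ip (lsum sc (Suc N) a BBt) = qform N U1 d + (1 - vnorm2 N d)"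
    using hnorm2_tail[of "Suc N" a] hnorm2_lsum_BBt[of "Suc N" a] head by simp_all
  thus ?thesis using riesz_values_memI by metis
qed

lemma BBt_value_bounds:
  assumes "(\<Sum>j<n. (cmod (a j))\<^sup>2) = 1"
  shows "min_eig N U1 \<le> hnorm2 ip (lsum sc n a BBt)"
    and "hnorm2 ip (lsum sc n a BBt) \<le> max (max_eig N U1) 1"
proof -
  define t where "t = vnorm2 N (head n a)"
  have t: "0 \<le> t" "t \<le> 1" unfolding t_def using head_vnorm2_le[OF assms] vnorm2_nonneg by auto
  have val: "hnorm2 ip (lsum sc n a BBt) = qform N U1 (head n a) + (1 - t)"
    unfolding hnorm2_lsum_BBt hnorm2_tail assms t_def ..
  have "min_eig N U1 * (1 - t) \<le> 1 - t"
    using min_eig_U1_le_1 t by (intro mult_left_le_one_le) (auto simp: min_eig_U1_pos less_imp_le)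
  thus "min_eig N U1 \<le> hnorm2 ip (lsum sc n a BBt)"
    using min_eig_U1(1)[of "head n a"] unfolding val t_def[symmetric] by (simp add: algebra_simps)
  have "max_eig N U1 * t \<le> max (max_eig N U1) 1 * t" "1 - t \<le> max (max_eig N U1) 1 * (1 - t)"
    using t mult_right_mono[of 1 "max (max_eig N U1) 1" "1 - t"] by (auto intro: mult_right_mono)
  thus "hnorm2 ip (lsum sc n a BBt) \<le> max (max_eig N U1) 1"
    using max_eig_U1(1)[of "head n a"] unfolding val t_def[symmetric] by (simp add: algebra_simps)
qed

lemma opt_upper_BBt: "opt_upper sc ip BBt = max (max_eig N U1) 1"
  unfolding opt_upper_def
proof (rule cSup_eq_maximum)
  obtain d where d: "vnorm2 N d = 1" "qform N U1 d = max_eig N U1"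
    using max_eig_U1(2) by blast
  have "max_eig N U1 \<in> riesz_values sc ip BBt"
    using BBt_value_memI[of d] d by simp
  moreover have "1 \<in> riesz_values sc ip BBt"
    using BBt_value_memI[of "\<lambda>_. 0"] by (simp add: vnorm2_def qform_eq_0)
  ultimately show "max (max_eig N U1) 1 \<in> riesz_values sc ip BBt"
    by (simp add: max_def)
  show "x \<le> max (max_eig N U1) 1" if "x \<in> riesz_values sc ip BBt" for x
    using that by (elim riesz_valuesE) (simp add: BBt_value_bounds)
qed

lemma opt_lower_BBt: "opt_lower sc ip BBt = min_eig N U1"
  unfolding opt_lower_def
proof (rule cInf_eq_minimum)
  obtain d where d: "vnorm2 N d = 1" "qform N U1 d = min_eig N U1"
    using min_eig_U1(2) by blast
  show "min_eig N U1 \<in> riesz_values sc ip BBt"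
    using BBt_value_memI[of d] d by simp
  show "min_eig N U1 \<le> x" if "x \<in> riesz_values sc ip BBt" for x
    using that by (elim riesz_valuesE) (simp add: BBt_value_bounds)
qed

lemma riesz_basis_BBt: "riesz_basis sc ip BBt"
proof (rule hnorm2_proj_le_coeffs_proj_w)
  fix E assume E: "E \<ge> 0" "\<And>f. hnorm2 ip (proj N f) \<le> E * (\<Sum>j<N. (cmod (ip f (proj N (w j))))\<^sup>2)"
  show ?thesis
  proof (rule riesz_basisI[OF BBt_sums])
    show "1 / (E + 1) * hnorm2 ip f \<le> (\<Sum>j<N. (cmod (ip f (proj N (w j))))\<^sup>2) + hnorm2 ip (f - proj N f)" for f
      by (rule BBt_analysis_lower[OF E])
    show "(\<Sum>j<N. (cmod (ip f (proj N (w j))))\<^sup>2) + hnorm2 ip (f - proj N f) \<le> (real N + 1) * hnorm2 ip f" for f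
      by (rule analysis_upper_bound) (metis hnorm2_proj_le unit)
    show "0 < 1 / (E + 1)" using E(1) by simp
    show "min_eig N U1 \<le> hnorm2 ip (lsum sc n a BBt) \<and> hnorm2 ip (lsum sc n a BBt) \<le> max (max_eig N U1) 1"
      if "(\<Sum>j<n. (cmod (a j))\<^sup>2) = 1" for n a
      using BBt_value_bounds[OF that] by blast
    show "0 < min_eig N U1" by (rule min_eig_U1_pos)
  qed
qed

lemma BB_value_bounds:
  assumes "(\<Sum>j<n. (cmod (a j))\<^sup>2) = 1"
  shows "vnorm2 N (head n a) \<le> 1"
    and "G (head n a) \<le> hnorm2 ip (lsum sc n a BB)"
    and "hnorm2 ip (lsum sc n a BB) \<le> F (head n a)"
proof -
  define d where "d = head n a"
  have tail: "hnorm2 ip (tail n a) = 1 - vnorm2 N d"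
    unfolding hnorm2_tail assms d_def ..
  show "vnorm2 N (head n a) \<le> 1" by (rule head_vnorm2_le[OF assms])
  show "G (head n a) \<le> hnorm2 ip (lsum sc n a BB)"
    using hnorm2_add_ge[of "wcomb d - proj N (wcomb d)" "tail n a"]
    unfolding hnorm2_lsum_BB G_def d_def[symmetric] tail hnorm2_residual_wcomb
    by (simp add: power2_commute)
  show "hnorm2 ip (lsum sc n a BB) \<le> F (head n a)"
    using hnorm2_add_le[of "wcomb d - proj N (wcomb d)" "tail n a"]
    unfolding hnorm2_lsum_BB F_def d_def[symmetric] tail hnorm2_residual_wcomb
    by (simp add: add.commute)
qed

lemma BB_value_approx:
  assumes d: "vnorm2 N d \<le> 1" and \<sigma>: "\<sigma>\<^sup>2 = 1" and e: "e > 0"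
  shows "\<exists>x\<in>riesz_values sc ip BB.
    \<bar>x - (qform N U1 d + (sqrt (1 - vnorm2 N d) + \<sigma> * sqrt (qform N U2 d))\<^sup>2)\<bar> \<le> e"
proof -
  define y where "y = wcomb d - proj N (wcomb d)"
  define r where "r = sqrt (1 - vnorm2 N d)"
  have r: "0 \<le> r" "r\<^sup>2 = 1 - vnorm2 N d" unfolding r_def using d by auto
  have hy: "hnorm2 ip y = qform N U2 d" unfolding y_def by (rule hnorm2_residual_wcomb)
  have "ip y (v j) = 0" if "j < N" for j
    unfolding y_def using that by (simp add: ip_residual_onb)
  then obtain n b where n: "N \<le> n" and b: "\<And>j. j < N \<Longrightarrow> b j = 0"
    and norm_z: "hnorm2 ip (\<Sum>j<n. sc (b j) (v j)) = r\<^sup>2"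
    and close: "\<bar>hnorm2 ip (y + (\<Sum>j<n. sc (b j) (v j))) - (hnorm2 ip y + r\<^sup>2 + 2 * \<sigma> * r * sqrt (hnorm2 ip y))\<bar> \<le> e"
    by (rule aligned_comb_exists[OF _ r(1) \<sigma> e]) blast+
  define z where "z = (\<Sum>j<n. sc (b j) (v j))"
  define a where "a j = (if j < N then cnj (d j) else b j)" for j
  have head: "head n a j = d j" if "j < N" for j
    using that n unfolding head_def a_def by simp
  have tail: "tail n a = z"
    unfolding tail_def z_def a_def using b by (intro sum.cong) auto
  have "wcomb (head n a) = wcomb d" "qform N U1 (head n a) = qform N U1 d"
    "vnorm2 N (head n a) = vnorm2 N d"
    using head by (auto intro: wcomb_cong qform_cong vnorm2_cong)
  hence "hnorm2 ip (lsum sc n a BB) = qform N U1 d + hnorm2 ip (y + z)"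
    and "(\<Sum>j<n. (cmod (a j))\<^sup>2) = 1"
    using hnorm2_lsum_BB[of n a] hnorm2_tail[of n a] norm_z r(2)
    unfolding tail y_def z_def by simp_all
  hence "qform N U1 d + hnorm2 ip (y + z) \<in> riesz_values sc ip BB"
    using riesz_values_memI by metis
  moreover have "(r + \<sigma> * sqrt (qform N U2 d))\<^sup>2
      = (1 - vnorm2 N d) + qform N U2 d + 2 * \<sigma> * r * sqrt (qform N U2 d)"
    using \<sigma> qform_U2_nonneg[of d] r(2) by (simp add: power2_sum power_mult_distrib algebra_simps)
  hence "\<bar>qform N U1 d + hnorm2 ip (y + z) - (qform N U1 d + (r + \<sigma> * sqrt (qform N U2 d))\<^sup>2)\<bar> \<le> e"
    using close unfolding z_def[symmetric] hy r(2) by (simp add: algebra_simps)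
  ultimately show ?thesis unfolding r_def by blast
qed

lemma F_attains_max:
  obtains d where "vnorm2 N d \<le> 1" "\<And>c. vnorm2 N c \<le> 1 \<Longrightarrow> F c \<le> F d"
proof (rule continuous_attains_max_vnorm2[of F N "{..1}" "\<lambda>_. 0"])
  show "continuous_on UNIV F" unfolding F_def by (intro continuous_intros)
  show "F (trunc N c) = F c" for c unfolding F_def by simp
qed (use that in auto)

lemma G_attains_min:
  obtains d where "vnorm2 N d \<le> 1" "\<And>c. vnorm2 N c \<le> 1 \<Longrightarrow> G d \<le> G c"
proof (rule continuous_attains_min_vnorm2[of G N "{..1}" "\<lambda>_. 0"])
  show "continuous_on UNIV G" unfolding G_def by (intro continuous_intros)
  show "G (trunc N c) = G c" for c unfolding G_def by simp
qed (use that in auto)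

lemma G_pos: "vnorm2 N c \<le> 1 \<Longrightarrow> G c > 0"
proof (cases "\<exists>i<N. c i \<noteq> 0")
  case True
  then obtain i where "i < N" "c i \<noteq> 0" by blast
  hence "qform N U1 c > 0" by (rule qform_U1_pos)
  thus ?thesis unfolding G_def by (simp add: add_pos_nonneg)
next
  case False
  hence "qform N U1 c = 0" "qform N U2 c = 0" "vnorm2 N c = 0"
    by (auto intro: qform_eq_0 simp: vnorm2_eq_0_iff)
  thus ?thesis unfolding G_def by simp
qed

lemma opt_upper_BB_eq:
  assumes "vnorm2 N d \<le> 1" "\<And>c. vnorm2 N c \<le> 1 \<Longrightarrow> F c \<le> F d"
  shows "opt_upper sc ip BB = F d"
  unfolding opt_upper_def
proof (rule cSup_eq_approx)
  show "x \<le> F d" if "x \<in> riesz_values sc ip BB" for x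
    using that by (elim riesz_valuesE) (metis BB_value_bounds assms(2) order_trans)
  show "\<exists>x\<in>riesz_values sc ip BB. F d - e \<le> x" if e: "e > 0" for e
  proof -
    obtain x where "x \<in> riesz_values sc ip BB" "\<bar>x - F d\<bar> \<le> e"
      using BB_value_approx[OF assms(1) _ e, of 1] by (auto simp: F_def)
    thus ?thesis by (intro bexI[of _ x]) (auto simp: abs_le_iff)
  qed
qed

lemma opt_lower_BB_eq:
  assumes "vnorm2 N d \<le> 1" "\<And>c. vnorm2 N c \<le> 1 \<Longrightarrow> G d \<le> G c"
  shows "opt_lower sc ip BB = G d"
  unfolding opt_lower_def
proof (rule cInf_eq_approx)
  show "G d \<le> x" if "x \<in> riesz_values sc ip BB" for x
    using that by (elim riesz_valuesE) (metis BB_value_bounds assms(2) order_trans)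
  show "\<exists>x\<in>riesz_values sc ip BB. x \<le> G d + e" if e: "e > 0" for e
  proof -
    obtain x where "x \<in> riesz_values sc ip BB" "\<bar>x - G d\<bar> \<le> e"
      using BB_value_approx[OF assms(1) _ e, of "- 1"] by (auto simp: G_def)
    thus ?thesis by (intro bexI[of _ x]) (auto simp: abs_le_iff)
  qed
qed

lemma opt_upper_BB:
  "opt_upper sc ip BB \<in> F ` {c. vnorm2 N c \<le> 1} \<and> (\<forall>c. vnorm2 N c \<le> 1 \<longrightarrow> F c \<le> opt_upper sc ip BB)"
proof (rule F_attains_max)
  fix d assume "vnorm2 N d \<le> 1" "\<And>c. vnorm2 N c \<le> 1 \<Longrightarrow> F c \<le> F d"
  thus ?thesis using opt_upper_BB_eq by auto
qed

lemma opt_lower_BB: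
  "opt_lower sc ip BB \<in> G ` {c. vnorm2 N c \<le> 1} \<and> (\<forall>c. vnorm2 N c \<le> 1 \<longrightarrow> opt_lower sc ip BB \<le> G c)"
proof (rule G_attains_min)
  fix d assume "vnorm2 N d \<le> 1" "\<And>c. vnorm2 N c \<le> 1 \<Longrightarrow> G d \<le> G c"
  thus ?thesis using opt_lower_BB_eq by auto
qed

lemma riesz_basis_BB: "riesz_basis sc ip BB"
proof -
  obtain E where E: "E \<ge> 0" "\<And>f. hnorm2 ip (proj N f) \<le> E * (\<Sum>j<N. (cmod (ip f (proj N (w j))))\<^sup>2)"
    using hnorm2_proj_le_coeffs_proj_w by metis
  obtain dF where dF: "vnorm2 N dF \<le> 1" "\<And>c. vnorm2 N c \<le> 1 \<Longrightarrow> F c \<le> F dF"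
    using F_attains_max by metis
  obtain dG where dG: "vnorm2 N dG \<le> 1" "\<And>c. vnorm2 N c \<le> 1 \<Longrightarrow> G dG \<le> G c"
    using G_attains_min by metis
  show ?thesis
  proof (rule riesz_basisI[OF BB_sums])
    show "1 / (2 * (E + 1) * (real N + 1) + 1) * hnorm2 ip f
        \<le> (\<Sum>j<N. (cmod (ip f (w j)))\<^sup>2) + hnorm2 ip (f - proj N f)" for f
      by (rule BB_analysis_lower[OF E])
    show "(\<Sum>j<N. (cmod (ip f (w j)))\<^sup>2) + hnorm2 ip (f - proj N f) \<le> (real N + 1) * hnorm2 ip f" for f
      by (rule analysis_upper_bound) (simp add: unit)
    show "0 < 1 / (2 * (E + 1) * (real N + 1) + 1)" using E(1) by (simp add: add_pos_nonneg)
    show "G dG \<le> hnorm2 ip (lsum sc n a BB) \<and> hnorm2 ip (lsum sc n a BB) \<le> F dF"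
      if "(\<Sum>j<n. (cmod (a j))\<^sup>2) = 1" for n a
      using BB_value_bounds[OF that] dF(2) dG(2) by (meson order_trans)
    show "0 < G dG" using G_pos dG(1) by blast
  qed
qed

lemma opt_upper_BBt_le_BB: "opt_upper sc ip BBt \<le> opt_upper sc ip BB"
proof -
  obtain d where d: "vnorm2 N d = 1" "qform N U1 d = max_eig N U1"
    using max_eig_U1(2) by blast
  have "F (\<lambda>_. 0) \<le> opt_upper sc ip BB" "F d \<le> opt_upper sc ip BB"
    using opt_upper_BB d(1) by simp_all
  moreover have "F (\<lambda>_. 0) = 1" unfolding F_def by (simp add: qform_eq_0)
  moreover have "max_eig N U1 \<le> F d" unfolding F_def d(2)[symmetric] by simp
  ultimately show ?thesis unfolding opt_upper_BBt by simp
qed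

text \<open>The bound for \<open>opt_lower sc ip BB\<close> comes from a combination of \<open>w\<^sub>j\<close> and the tail that
  cancels the component \<open>p''(w\<^sub>j)\<close> exactly.\<close>

lemma opt_lower_BB_le_hnorm2_proj: "j < N \<Longrightarrow> opt_lower sc ip BB \<le> hnorm2 ip (proj N (w j))"
proof -
  assume j: "j < N"
  define S1 where "S1 = hnorm2 ip (proj N (w j))"
  define S2 where "S2 = hnorm2 ip (w j - proj N (w j))"
  have S: "S1 + S2 = 1" "S1 \<ge> 0" "S2 \<ge> 0"
    using hnorm2_proj_residual[of "w j" N] unit[of j] hnorm2_nonneg unfolding S1_def S2_def by auto
  define t where "t = 1 / sqrt (1 + S2)"
  have t2: "t\<^sup>2 = 1 / (1 + S2)" unfolding t_def using S by (simp add: power_divide)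
  define c where "c i = complex_of_real t * unit_vec j i" for i
  have vc: "vnorm2 N c = t\<^sup>2"
    unfolding c_def vnorm2_scale vnorm2_unit_vec[OF j] by simp
  have "vnorm2 N c \<le> 1" unfolding vc t2 using S by simp
  hence "opt_lower sc ip BB \<le> G c" using opt_lower_BB by blast
  moreover have "1 - t\<^sup>2 = t\<^sup>2 * S2" unfolding t2 using S by (simp add: field_simps)
  hence "G c = t\<^sup>2 * S1"
    unfolding G_def vc c_def qform_scale qform_U1_unit_vec[OF j] qform_U2_unit_vec[OF j] S1_def S2_def
    by simp
  also have "\<dots> \<le> S1" using S t2 by (intro mult_left_le_one_le) auto
  ultimately show ?thesis unfolding S1_def by simp
qed

end

theorem mainTheorem2:
  fixes sc :: "complex \<Rightarrow> 'a::ab_group_add \<Rightarrow> 'a"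
    and ip :: "'a \<Rightarrow> 'a \<Rightarrow> complex"
    and v w :: "nat \<Rightarrow> 'a"
    and N :: nat
    and H1 :: "'a set" and p1 p2 :: "'a \<Rightarrow> 'a"
    and U1 U2 :: "nat \<Rightarrow> nat \<Rightarrow> complex"
    and F G :: "(nat \<Rightarrow> complex) \<Rightarrow> real"
    and BB BBt :: "nat \<Rightarrow> 'a"
  assumes hilb: "complex_hilbert_space sc ip"
    and sep: "hseparable ip"
    and onb: "orthonormal_basis ip v"
    and unit: "\<forall>j. hnorm ip (w j) = 1"
    and N: "N \<ge> 1"
    and H1_def: "H1 = fspan sc N v"
    and p1_def: "p1 = orth_proj ip H1"
    and p2_def: "p2 = orth_proj ip (orth_compl ip H1)"
    and U1_def: "U1 = gram ip (\<lambda>j. p1 (w j))"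
    and U2_def: "U2 = gram ip (\<lambda>j. p2 (w j))"
    and BB_def: "BB = (\<lambda>j. if j < N then w j else v j)"
    and BBt_def: "BBt = (\<lambda>j. if j < N then p1 (w j) else v j)"
    and F_def: "F = (\<lambda>c. qform N U1 c + (sqrt (1 - vnorm2 N c) + sqrt (qform N U2 c))\<^sup>2)"
    and G_def: "G = (\<lambda>c. qform N U1 c + (sqrt (1 - vnorm2 N c) - sqrt (qform N U2 c))\<^sup>2)"
    and basis: "is_basis_of sc N (\<lambda>j. p1 (w j)) H1"
  shows "riesz_basis sc ip BB
    \<and> opt_upper sc ip BB \<in> F ` {c. vnorm2 N c \<le> 1}
    \<and> (\<forall>c. vnorm2 N c \<le> 1 \<longrightarrow> F c \<le> opt_upper sc ip BB)
    \<and> opt_lower sc ip BB \<in> G ` {c. vnorm2 N c \<le> 1}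
    \<and> (\<forall>c. vnorm2 N c \<le> 1 \<longrightarrow> opt_lower sc ip BB \<le> G c)
    \<and> riesz_basis sc ip BBt
    \<and> opt_upper sc ip BB \<ge> opt_upper sc ip BBt
    \<and> opt_upper sc ip BBt = max (max_eig N U1) 1
    \<and> min_eig N U1 = opt_lower sc ip BBt
    \<and> opt_lower sc ip BBt \<le> max (opt_lower sc ip BB) (opt_lower sc ip BBt)
    \<and> max (opt_lower sc ip BB) (opt_lower sc ip BBt) \<le> Min ((\<lambda>j. (hnorm ip (p1 (w j)))\<^sup>2) ` {..<N})"
proof -
  interpret hilbert_onb sc ip v
    using hilb onb by (simp add: hilbert_onb_def hilbert_onb_axioms_def complex_hilbert_space_iff)
  have p1: "p1 = proj N" and p2: "p2 = (\<lambda>x. x - proj N x)"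
    unfolding p1_def p2_def H1_def by (simp_all add: orth_proj_fspan orth_proj_orth_compl_fspan fun_eq_iff)
  interpret R: basis_replacement sc ip v w N
    using unit N basis by unfold_locales (simp_all add: hnorm_power2[symmetric] p1 H1_def)
  have defs: "BB = R.BB" "BBt = R.BBt" "U1 = R.U1" "U2 = R.U2" "F = R.F" "G = R.G"
    unfolding BB_def BBt_def U1_def U2_def F_def G_def p1 p2
      R.BB_def R.BBt_def R.U1_def R.U2_def R.F_def[abs_def] R.G_def[abs_def] by simp_all
  have "opt_lower sc ip BB \<le> (hnorm ip (p1 (w j)))\<^sup>2" "opt_lower sc ip BBt \<le> (hnorm ip (p1 (w j)))\<^sup>2"
    if "j < N" for j
    using R.opt_lower_BB_le_hnorm2_proj R.min_eig_U1_le_hnorm2_proj R.opt_lower_BBt that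
    unfolding defs p1 hnorm_power2 by simp_all
  hence "max (opt_lower sc ip BB) (opt_lower sc ip BBt) \<le> Min ((\<lambda>j. (hnorm ip (p1 (w j)))\<^sup>2) ` {..<N})"
    using N by (subst Min_ge_iff) (auto simp: lessThan_empty_iff)
  thus ?thesis
    unfolding defs using R.riesz_basis_BB R.opt_upper_BB R.opt_lower_BB R.riesz_basis_BBt R.opt_upper_BBt_le_BB
      R.opt_upper_BBt R.opt_lower_BBt by simp
qed

end
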